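(* Let $d,h\ge1$, $1/2<\alpha\le1$, and let $\mathbf{x}:[0,1]\to\mathbb{R}^h$ satisfy $|\mathbf{x}(t)-\mathbf{x}(s)|\le C_\alpha|t-s|^\alpha$ for some $C_\alpha\in(0,\infty)$. Let $\mathbf{f}=[f_{ij}]:\mathbb{R}^d\to\mathbb{R}^{d\times h}$ with each $f_{ij}\in C^2(\mathbb{R}^d)$ and $\max\{|\mathbf{f}|,|\nabla\mathbf{f}|,|\nabla^2\mathbf{f}|\}<\infty$. Let $\mathbf{y}$ solve $\mathbf{y}(t)=\mathbf{y}_0+\int_0^t\mathbf{f}(\mathbf{y}(s))\,d\mathbf{x}(s)$ (Young integral), and for $n\ge0$ let $\mathbf{y}_n$ be the Euler scheme on $D_n=\{t^n_k=k/2^n:k=0,\dots,2^n\}$: $\mathbf{y}_n(t^n_0)=\mathbf{y}_0$, $\mathbf{y}_n(t^n_{k+1})=\mathbf{y}_n(t^n_k)+\mathbf{f}(\mathbf{y}_n(t^n_k))(\mathbf{x}(t^n_{k+1})-\mathbf{x}(t^n_k))$. Then $$H_\alpha(\mathbf{f}(\mathbf{y})-\mathbf{f}(\mathbf{y}_n)\mid D_n)\le\bigl(d|\nabla\mathbf{f}|+d^2|\nabla^2\mathbf{f}|(G_1^*+G_1)\bigr)H_\alpha(\mathbf{y}-\mathbf{y}_n\mid D_n)+d^2|\nabla^2\mathbf{f}|(G_1^*+G_1)\,|\mathbf{y}(0)-\mathbf{y}_n(0)|.$$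
   Context: For a vector or matrix, $|\cdot|$ denotes the maximum absolute value of its entries; $|\mathbf{f}|=\max_{ij}\sup|f_{ij}|$, $|\nabla\mathbf{f}|=\max_{ij}\sup|\nabla f_{ij}|$, $|\nabla^2\mathbf{f}|=\max_{ij}\sup|\nabla^2f_{ij}|$. Restricted Hölder norm: for a path $\mathbf{u}$ defined at least on $D_n$, $H_\alpha(\mathbf{u}\mid D_n)=\sup_{0\le i<j\le2^n}|\mathbf{u}(t^n_i)-\mathbf{u}(t^n_j)|/|t^n_i-t^n_j|^\alpha$. $K(2\alpha)=1+\sum_{n\ge1}n^{-2\alpha}$; $G_1^*=2h\lceil(2dhC_\alpha K(2\alpha)|\nabla\mathbf{f}|)^{1/\alpha}\rceil^{1-\alpha}|\mathbf{f}|C_\alpha$; $L=\frac{4}{1-2^{1-2\alpha}}(hC_\alpha)^2|\nabla\mathbf{f}||\mathbf{f}|$, $\omega=(h|\mathbf{f}|C_\alpha/L)^{1/\alpha}$, $G_1=(L+h|\mathbf{f}|C_\alpha)(1+\omega^{-1})$. *)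

theory Defs
  imports "HOL-Analysis.Analysis"
begin

definition vabs :: "real^'n::finite \<Rightarrow> real" where
  "vabs v = Max (range (\<lambda>i. \<bar>v $ i\<bar>))"

definition mabs :: "real^'h::finite^'d::finite \<Rightarrow> real" where
  "mabs M = Max (range (\<lambda>(i,j). \<bar>M $ i $ j\<bar>))"

definition grid :: "nat \<Rightarrow> nat \<Rightarrow> real" where
  "grid n k = real k / 2 ^ n"

text \<open>Restricted Hoelder seminorm H_alpha(u | D_n); u is given by its values at the
  grid points (u k = value at t^n_k), nm is the entrywise max-abs norm.\<close>
definition Hgrid :: "('a::ab_group_add \<Rightarrow> real) \<Rightarrow> nat \<Rightarrow> real \<Rightarrow> (nat \<Rightarrow> 'a) \<Rightarrow> real" where
  "Hgrid nm n \<alpha> u = Max {nm (u i - u j) / \<bar>grid n i - grid n j\<bar> powr \<alpha> | i j. i < j \<and> j \<le> 2 ^ n}"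

fun euler :: "(real^'d::finite \<Rightarrow> real^'h::finite^'d) \<Rightarrow> (real \<Rightarrow> real^'h) \<Rightarrow> real^'d \<Rightarrow> nat \<Rightarrow> nat \<Rightarrow> real^'d" where
  "euler f x y0 n 0 = y0"
| "euler f x y0 n (Suc k) = euler f x y0 n k + f (euler f x y0 n k) *v (x (grid n (Suc k)) - x (grid n k))"

definition young_has_integral ::
  "(real \<Rightarrow> real^'h::finite^'d::finite) \<Rightarrow> (real \<Rightarrow> real^'h) \<Rightarrow> real \<Rightarrow> real \<Rightarrow> real^'d \<Rightarrow> bool" where
  "young_has_integral g x a b I \<longleftrightarrow>
     (\<forall>e>0. \<exists>\<delta>>0. \<forall>(m::nat) (p::nat \<Rightarrow> real) (\<xi>::nat \<Rightarrow> real).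
        p 0 = a \<and> p m = b \<and>
        (\<forall>k<m. p k < p (Suc k) \<and> p (Suc k) - p k < \<delta> \<and> p k \<le> \<xi> k \<and> \<xi> k \<le> p (Suc k))
        \<longrightarrow> norm ((\<Sum>k<m. g (\<xi> k) *v (x (p (Suc k)) - x (p k))) - I) < e)"

definition supF :: "(real^'d::finite \<Rightarrow> real^'h::finite^'d) \<Rightarrow> real" where
  "supF f = Sup {\<bar>f z $ i $ j\<bar> | z i j. True}"

definition supDF :: "('d::finite \<Rightarrow> 'h::finite \<Rightarrow> real^'d \<Rightarrow> real^'d) \<Rightarrow> real" where
  "supDF Df = Sup {\<bar>Df i j z $ k\<bar> | i j z k. True}"

definition supD2F :: "('d::finite \<Rightarrow> 'h::finite \<Rightarrow> real^'d \<Rightarrow> real^'d^'d) \<Rightarrow> real" where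
  "supD2F D2f = Sup {\<bar>D2f i j z $ k $ l\<bar> | i j z k l. True}"

end

(*
  At two grid points, f(y) - f(y_n) differs by a second difference of f. The mean value theorem
  along two segments bounds it by d |grad f| times the increment of y - y_n plus
  d^2 |Hess f| sup |y - y_n| times the increment of the Euler scheme y_n. Everything therefore
  reduces to the Hoelder bound |y_n(t_j) - y_n(t_i)| <= G1* |t_j - t_i|^alpha, uniformly in n.

  That bound is Davie's argument. Below the scale 1/N, N = ceil((2 d h C K |grad f|)^(1/alpha)),
  the Young-Loeve estimate (removing partition points one at a time) shows that an Euler increment
  differs from its first-order term f(y_n) (x(t) - x(s)) by at most that term, so it is at most
  2 h |f| C |t - s|^alpha. A longer interval is cut into at most N such pieces, which costs the
  factor N^(1 - alpha). To handle pieces whose endpoints are not grid points, the scheme and the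
  driver x are interpolated linearly on each dyadic cell.
*)
theory Submission
  imports Defs
begin

section \<open>Max-abs norms\<close>

lemma abs_vec_nth_le_vabs: "\<bar>v $ i\<bar> \<le> vabs v"
  unfolding vabs_def by (rule Max_ge) auto

lemma vabs_leI: "(\<And>i. \<bar>v $ i\<bar> \<le> c) \<Longrightarrow> vabs v \<le> c"
  unfolding vabs_def by (subst Max_le_iff) auto

lemma vabs_nonneg: "0 \<le> vabs v"
  using abs_vec_nth_le_vabs[of v] abs_ge_zero order_trans by blast

lemma vabs_zero [simp]: "vabs 0 = 0"
  unfolding vabs_def by simp

lemma vabs_minus_commute: "vabs (a - b) = vabs (b - a)"
  unfolding vabs_def by (simp add: abs_minus_commute)

lemma vabs_triangle: "vabs (a + b) \<le> vabs a + vabs b"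
  by (rule vabs_leI) (smt (verit) abs_vec_nth_le_vabs vector_add_component)

lemma vabs_triangle3: "vabs (a + b + c) \<le> vabs a + vabs b + vabs c"
  using vabs_triangle[of "a + b" c] vabs_triangle[of a b] by linarith

lemma vabs_scaleR_le: "vabs (c *\<^sub>R v) \<le> \<bar>c\<bar> * vabs v"
  by (rule vabs_leI) (simp add: abs_mult mult_left_mono abs_vec_nth_le_vabs)

lemma vabs_sum_le: "finite I \<Longrightarrow> vabs (\<Sum>i\<in>I. F i) \<le> (\<Sum>i\<in>I. vabs (F i))"
proof (induction I rule: finite_induct)
  case (insert i I)
  then show ?case using vabs_triangle[of "F i" "sum F I"] by simp
qed simp

lemma abs_mat_nth_le_mabs: "\<bar>M $ i $ j\<bar> \<le> mabs M"
  unfolding mabs_def by (rule Max_ge) auto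

lemma mabs_leI: "(\<And>i j. \<bar>M $ i $ j\<bar> \<le> c) \<Longrightarrow> mabs M \<le> c"
  unfolding mabs_def by (subst Max_le_iff) auto

lemma mabs_nonneg: "0 \<le> mabs M"
  using abs_mat_nth_le_mabs[of M] abs_ge_zero order_trans by blast

lemma mabs_eq_0_iff: "mabs M = 0 \<longleftrightarrow> M = 0"
proof
  assume "mabs M = 0"
  then have "M $ i $ j = 0" for i j using abs_mat_nth_le_mabs[of M i j] by simp
  then show "M = 0" by (simp add: vec_eq_iff)
qed (simp add: mabs_def)

lemma vabs_matrix_vector_mult_le:
  "vabs (M *v w) \<le> real CARD('h) * mabs M * vabs (w :: real^'h::finite)"
proof (rule vabs_leI)
  fix i
  have "\<bar>(M *v w) $ i\<bar> \<le> (\<Sum>j\<in>UNIV. \<bar>M $ i $ j * w $ j\<bar>)"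
    unfolding matrix_vector_mult_def by (simp add: sum_abs)
  also have "\<dots> \<le> (\<Sum>j\<in>(UNIV::'h set). mabs M * vabs w)"
    by (intro sum_mono)
      (simp add: abs_mult mult_mono' abs_mat_nth_le_mabs abs_vec_nth_le_vabs mabs_nonneg)
  finally show "\<bar>(M *v w) $ i\<bar> \<le> real CARD('h) * mabs M * vabs w" by simp
qed

lemma abs_inner_le_vabs:
  fixes G w :: "real^'d::finite"
  assumes "\<And>k. \<bar>G $ k\<bar> \<le> B"
  shows "\<bar>G \<bullet> w\<bar> \<le> real CARD('d) * B * vabs w"
proof -
  have "\<bar>G \<bullet> w\<bar> \<le> (\<Sum>k\<in>UNIV. \<bar>G $ k * w $ k\<bar>)"
    unfolding inner_vec_def by (simp add: sum_abs)
  also have "\<dots> \<le> (\<Sum>k\<in>(UNIV::'d set). B * vabs w)"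
    by (intro sum_mono) (simp add: abs_mult mult_mono' assms abs_vec_nth_le_vabs)
  finally show ?thesis by simp
qed

section \<open>Mean value estimates\<close>

lemma has_real_derivative_along_line:
  fixes g :: "real^'d::finite \<Rightarrow> real"
  assumes "\<And>z. (g has_derivative (\<lambda>v. G z \<bullet> v)) (at z)"
  shows "((\<lambda>\<theta>. g (b + \<theta> *\<^sub>R w)) has_real_derivative G (b + \<theta> *\<^sub>R w) \<bullet> w) (at \<theta>)"
proof -
  have "((\<lambda>\<theta>. b + \<theta> *\<^sub>R w) has_derivative (\<lambda>t. t *\<^sub>R w)) (at \<theta>)"
    by (auto intro!: derivative_eq_intros)
  from has_derivative_compose[OF this assms]
  have "((\<lambda>\<theta>. g (b + \<theta> *\<^sub>R w)) has_derivative (\<lambda>t. G (b + \<theta> *\<^sub>R w) \<bullet> (t *\<^sub>R w))) (at \<theta>)"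
    by simp
  moreover have "(\<lambda>t. G (b + \<theta> *\<^sub>R w) \<bullet> (t *\<^sub>R w)) = (*) (G (b + \<theta> *\<^sub>R w) \<bullet> w)"
    by (auto simp: inner_scaleR_right)
  ultimately show ?thesis by (simp add: has_field_derivative_def)
qed

lemma lipschitz_of_gradient_bound:
  fixes g :: "real^'d::finite \<Rightarrow> real"
  assumes "\<And>z. (g has_derivative (\<lambda>v. G z \<bullet> v)) (at z)" and "\<And>z k. \<bar>G z $ k\<bar> \<le> B"
  shows "\<bar>g a - g b\<bar> \<le> real CARD('d) * B * vabs (a - b)"
proof -
  obtain \<theta> where "g (b + 1 *\<^sub>R (a - b)) - g (b + 0 *\<^sub>R (a - b)) = (1 - 0) * (G (b + \<theta> *\<^sub>R (a - b)) \<bullet> (a - b))"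
    using MVT2[of 0 1 "\<lambda>\<theta>. g (b + \<theta> *\<^sub>R (a - b))" "\<lambda>\<theta>. G (b + \<theta> *\<^sub>R (a - b)) \<bullet> (a - b)"]
      has_real_derivative_along_line[OF assms(1)]
    by auto
  then show ?thesis using abs_inner_le_vabs[of "G (b + \<theta> *\<^sub>R (a - b))" B "a - b"] assms(2) by simp
qed

lemma mabs_lipschitz_of_gradient_bound:
  fixes F :: "real^'d::finite \<Rightarrow> real^'h::finite^'d"
  assumes "\<And>i j z. ((\<lambda>w. F w $ i $ j) has_derivative (\<lambda>v. DF i j z \<bullet> v)) (at z)"
    and "\<And>i j z k. \<bar>DF i j z $ k\<bar> \<le> B"
  shows "mabs (F a - F b) \<le> real CARD('d) * B * vabs (a - b)"
  by (rule mabs_leI) (simp add: lipschitz_of_gradient_bound[OF assms])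

lemma has_derivative_vec_nth_matrix:
  assumes "(G has_derivative (\<lambda>v. H z *v v)) (at z)"
  shows "((\<lambda>w. G w $ k) has_derivative (\<lambda>v. H z $ k \<bullet> v)) (at z)"
proof -
  have "(\<lambda>v. (H z *v v) $ k) = (\<lambda>v. H z $ k \<bullet> v)"
    by (auto simp: matrix_vector_mult_def inner_vec_def)
  then show ?thesis
    using bounded_linear.has_derivative[OF bounded_linear_vec_nth assms, of k] by simp
qed

text \<open>Mean value theorem along the segments from \<open>c\<close> to \<open>a\<close> and from \<open>e\<close> to \<open>b\<close>: the
  intermediate points are at distance at most \<open>M\<close>, which bounds the change of the gradient.\<close>
lemma second_difference_le:
  fixes F :: "real^'d::finite \<Rightarrow> real" and G :: "real^'d \<Rightarrow> real^'d" and H :: "real^'d \<Rightarrow> real^'d^'d"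
  assumes dF: "\<And>z. (F has_derivative (\<lambda>v. G z \<bullet> v)) (at z)"
    and dG: "\<And>z. (G has_derivative (\<lambda>v. H z *v v)) (at z)"
    and G_bound: "\<And>z k. \<bar>G z $ k\<bar> \<le> B1" and H_bound: "\<And>z k l. \<bar>H z $ k $ l\<bar> \<le> B2"
    and "vabs (c - e) \<le> M" and "vabs (a - b) \<le> M"
  shows "\<bar>F a - F b - F c + F e\<bar> \<le> real CARD('d) * B1 * vabs ((a - c) - (b - e))
      + real CARD('d) * (real CARD('d) * B2 * M) * vabs (b - e)"
proof -
  define d where "d = real CARD('d)"
  define \<phi> where "\<phi> \<theta> = F (c + \<theta> *\<^sub>R (a - c)) - F (e + \<theta> *\<^sub>R (b - e))" for \<theta>
  define \<phi>' where "\<phi>' \<theta> = G (c + \<theta> *\<^sub>R (a - c)) \<bullet> (a - c) - G (e + \<theta> *\<^sub>R (b - e)) \<bullet> (b - e)" for \<theta>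
  have "(\<phi> has_real_derivative \<phi>' \<theta>) (at \<theta>)" for \<theta>
    unfolding \<phi>_def \<phi>'_def by (intro DERIV_diff has_real_derivative_along_line[OF dF])
  then obtain \<xi> where \<xi>: "0 < \<xi>" "\<xi> < 1" "\<phi> 1 - \<phi> 0 = (1 - 0) * \<phi>' \<xi>"
    using MVT2[of 0 1 \<phi> \<phi>'] by auto
  define u where "u = c + \<xi> *\<^sub>R (a - c)"
  define v where "v = e + \<xi> *\<^sub>R (b - e)"
  have "vabs (u - v) \<le> vabs ((1 - \<xi>) *\<^sub>R (c - e)) + vabs (\<xi> *\<^sub>R (a - b))"
    using vabs_triangle[of "(1 - \<xi>) *\<^sub>R (c - e)" "\<xi> *\<^sub>R (a - b)"]
    by (simp add: u_def v_def algebra_simps)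
  also have "\<dots> \<le> (1 - \<xi>) * M + \<xi> * M"
    using vabs_scaleR_le[of "1 - \<xi>" "c - e"] vabs_scaleR_le[of \<xi> "a - b"] \<xi> assms(5,6)
    by (smt (verit) mult_left_mono)
  finally have uv: "vabs (u - v) \<le> M" by (simp add: algebra_simps)
  have G_lip: "\<bar>(G u - G v) $ k\<bar> \<le> d * B2 * M" for k
  proof -
    have "\<bar>G u $ k - G v $ k\<bar> \<le> d * B2 * vabs (u - v)"
      unfolding d_def
      by (rule lipschitz_of_gradient_bound[of "\<lambda>w. G w $ k" "\<lambda>z. H z $ k"])
        (auto intro: has_derivative_vec_nth_matrix[OF dG] H_bound)
    also have "\<dots> \<le> d * B2 * M"
      using uv H_bound[of u k k] by (intro mult_left_mono) (auto simp: d_def)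
    finally show ?thesis by simp
  qed
  have eq: "\<phi> 1 - \<phi> 0 = F a - F b - F c + F e"
    unfolding \<phi>_def by (simp add: algebra_simps)
  have "\<phi>' \<xi> = G u \<bullet> ((a - c) - (b - e)) + (G u - G v) \<bullet> (b - e)"
    unfolding \<phi>'_def u_def v_def by (simp add: algebra_simps inner_diff_left inner_diff_right)
  then have "\<bar>\<phi>' \<xi>\<bar> \<le> \<bar>G u \<bullet> ((a - c) - (b - e))\<bar> + \<bar>(G u - G v) \<bullet> (b - e)\<bar>"
    by simp
  also have "\<dots> \<le> d * B1 * vabs ((a - c) - (b - e)) + d * (d * B2 * M) * vabs (b - e)"
    unfolding d_def by (intro add_mono abs_inner_le_vabs G_bound G_lip[unfolded d_def])
  finally show ?thesis using \<xi>(3) eq by (simp add: d_def)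
qed

lemma mabs_second_difference_le:
  fixes F :: "real^'d::finite \<Rightarrow> real^'h::finite^'d"
  assumes DF: "\<And>i j z. ((\<lambda>w. F w $ i $ j) has_derivative (\<lambda>v. DF i j z \<bullet> v)) (at z)"
    and D2F: "\<And>i j z. (DF i j has_derivative (\<lambda>v. D2F i j z *v v)) (at z)"
    and DF_bound: "\<And>i j z k. \<bar>DF i j z $ k\<bar> \<le> B1"
    and D2F_bound: "\<And>i j z k l. \<bar>D2F i j z $ k $ l\<bar> \<le> B2"
    and "vabs (c - e) \<le> M" "vabs (a - b) \<le> M"
  shows "mabs ((F a - F b) - (F c - F e)) \<le> real CARD('d) * B1 * vabs ((a - c) - (b - e))
      + real CARD('d) * (real CARD('d) * B2 * M) * vabs (b - e)"
proof (rule mabs_leI)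
  fix i j
  have "\<bar>F a $ i $ j - F b $ i $ j - F c $ i $ j + F e $ i $ j\<bar> \<le> real CARD('d) * B1 * vabs ((a - c) - (b - e))
      + real CARD('d) * (real CARD('d) * B2 * M) * vabs (b - e)"
    using assms(5,6) by (rule second_difference_le[OF DF D2F DF_bound D2F_bound])
  then show "\<bar>((F a - F b) - (F c - F e)) $ i $ j\<bar> \<le> real CARD('d) * B1 * vabs ((a - c) - (b - e))
      + real CARD('d) * (real CARD('d) * B2 * M) * vabs (b - e)"
    by (simp add: algebra_simps)
qed

section \<open>Inequalities for real powers\<close>

lemma powr_le_tangent_at_one:
  fixes a \<alpha> :: real
  assumes "0 \<le> a" "0 < \<alpha>" "\<alpha> \<le> 1"
  shows "a powr \<alpha> \<le> \<alpha> * a + (1 - \<alpha>)"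
proof (cases "a = 0")
  case False
  then have "a powr \<alpha> * 1 powr (1 - \<alpha>) \<le> \<alpha> * a + (1 - \<alpha>) * 1"
    using assms by (intro Youngs_inequality_0) auto
  then show ?thesis by simp
qed (use assms in simp)

lemma powr_concave:
  fixes A B w \<alpha> :: real
  assumes "0 \<le> A" "0 \<le> B" "0 \<le> w" "w \<le> 1" "0 < \<alpha>" "\<alpha> \<le> 1"
  shows "(1 - w) * A powr \<alpha> + w * B powr \<alpha> \<le> ((1 - w) * A + w * B) powr \<alpha>"
proof -
  define M where "M = (1 - w) * A + w * B"
  show ?thesis
  proof (cases "M = 0")
    case True
    then have "(1 - w) * A = 0" "w * B = 0"
      using assms unfolding M_def by (smt (verit) mult_nonneg_nonneg)+
    then have "(1 - w) * A powr \<alpha> = 0" "w * B powr \<alpha> = 0"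
      by auto
    then show ?thesis using powr_ge_zero[of M \<alpha>] unfolding M_def by linarith
  next
    case False
    moreover have "0 \<le> M" using assms by (simp add: M_def)
    ultimately have M: "0 < M" by simp
    have "(1 - w) * (A / M) powr \<alpha> + w * (B / M) powr \<alpha>
        \<le> (1 - w) * (\<alpha> * (A / M) + (1 - \<alpha>)) + w * (\<alpha> * (B / M) + (1 - \<alpha>))"
      using assms M by (intro add_mono mult_left_mono powr_le_tangent_at_one) auto
    also have "\<dots> = \<alpha> * (((1 - w) * A + w * B) / M) + (1 - \<alpha>)"
      using M by (simp add: field_simps)
    also have "\<dots> = 1" using M by (simp add: M_def[symmetric])
    finally have "(1 - w) * (A / M) powr \<alpha> + w * (B / M) powr \<alpha> \<le> 1" .
    then have "M powr \<alpha> * ((1 - w) * (A / M) powr \<alpha> + w * (B / M) powr \<alpha>) \<le> M powr \<alpha>"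
      by (simp add: mult_left_le)
    moreover have "M powr \<alpha> * ((1 - w) * (A / M) powr \<alpha> + w * (B / M) powr \<alpha>)
        = (1 - w) * A powr \<alpha> + w * B powr \<alpha>"
      using M assms by (simp add: powr_divide field_simps)
    ultimately show ?thesis by (simp add: M_def)
  qed
qed

lemma powr_mult_le_of_sum_le:
  fixes a b q \<alpha> :: real
  assumes "0 \<le> a" "0 \<le> b" "a + b \<le> 2 * q" "0 < \<alpha>"
  shows "a powr \<alpha> * b powr \<alpha> \<le> q powr (2 * \<alpha>)"
proof -
  have "4 * (a * b) \<le> (a + b) * (a + b)"
    using zero_le_square[of "a - b"] by (simp add: algebra_simps)
  also have "\<dots> \<le> (2 * q) * (2 * q)" using assms by (intro mult_mono) auto
  finally have "(a * b) powr \<alpha> \<le> (q * q) powr \<alpha>"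
    using assms by (intro powr_mono2) auto
  moreover have "(q * q) powr \<alpha> = q powr (2 * \<alpha>)"
    using assms by (simp only: powr_mult mult_2 powr_add)
  ultimately show ?thesis using assms by (simp add: powr_mult)
qed

lemma self_le_powr: "0 \<le> (s::real) \<Longrightarrow> s \<le> 1 \<Longrightarrow> \<alpha> \<le> 1 \<Longrightarrow> s \<le> s powr \<alpha>"
  using powr_mono'[of \<alpha> 1 s] by (cases "s = 0") auto

section \<open>The discrete Young--Loeve estimate\<close>

definition zeta_sum :: "real \<Rightarrow> nat \<Rightarrow> real" where
  "zeta_sum s m = (\<Sum>j=1..m. 1 / real j powr s)"

lemma zeta_sum_nonneg: "0 \<le> zeta_sum s m"
  unfolding zeta_sum_def by (intro sum_nonneg) auto

lemma zeta_sum_Suc: "zeta_sum s (Suc m) = zeta_sum s m + 1 / real (Suc m) powr s"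
  unfolding zeta_sum_def by simp

lemma zeta_sum_le_suminf:
  assumes "1 < s"
  shows "zeta_sum s m \<le> (\<Sum>j. 1 / real (Suc j) powr s)"
proof -
  have "summable (\<lambda>j. real j powr (- s))"
    using assms by (subst summable_real_powr_iff) auto
  then have "summable (\<lambda>j. 1 / real (Suc j) powr s)"
    by (subst (asm) summable_Suc_iff[symmetric]) (simp add: powr_minus_divide)
  moreover have "zeta_sum s m = (\<Sum>j<m. 1 / real (Suc j) powr s)"
    unfolding zeta_sum_def using sum.atLeast1_atMost_eq[of "\<lambda>j. 1 / real j powr s" m] by simp
  ultimately show ?thesis by (auto intro: sum_le_suminf)
qed

lemma exists_le_average:
  fixes D :: "'a \<Rightarrow> real"
  assumes "finite S" "S \<noteq> {}"
  shows "\<exists>k\<in>S. D k \<le> (\<Sum>j\<in>S. D j) / card S"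
proof (rule ccontr)
  assume "\<not> ?thesis"
  then have "(\<Sum>k\<in>S. (\<Sum>j\<in>S. D j) / card S) < (\<Sum>k\<in>S. D k)"
    using assms by (intro sum_strict_mono) auto
  then show False using assms by simp
qed

text \<open>The double steps \<open>p (j + 2) - p j\<close> add up to at most twice the total length.\<close>
lemma exists_short_double_step:
  fixes p :: "nat \<Rightarrow> real"
  assumes mono: "\<And>i. i \<le> M \<Longrightarrow> p i \<le> p (Suc i)" and "M \<noteq> 0"
  shows "\<exists>j<M. p (Suc (Suc j)) - p j \<le> 2 * ((p (Suc M) - p 0) / M)"
proof -
  have "(\<Sum>j<M. p (Suc (Suc j)) - p j)
      = (\<Sum>j<M. p (Suc (Suc j)) - p (Suc j)) + (\<Sum>j<M. p (Suc j) - p j)"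
    by (simp add: sum.distrib[symmetric])
  also have "\<dots> = (p (Suc M) - p (Suc 0)) + (p M - p 0)"
    by (simp only: sum_lessThan_telescope[where f="\<lambda>j. p (Suc j)"] sum_lessThan_telescope)
  also have "\<dots> \<le> 2 * (p (Suc M) - p 0)"
    using mono[of 0] mono[of M] by simp
  finally have "(\<Sum>j<M. p (Suc (Suc j)) - p j) / card {..<M} \<le> 2 * ((p (Suc M) - p 0) / M)"
    by (simp add: divide_right_mono)
  then show ?thesis
    using exists_le_average[of "{..<M}" "\<lambda>j. p (Suc (Suc j)) - p j"] \<open>M \<noteq> 0\<close> by force
qed

lemma riemann_sum_remove_point:
  fixes F :: "nat \<Rightarrow> real^'h::finite^'d::finite" and Y :: "nat \<Rightarrow> real^'h"
  assumes "j < M" and s: "\<And>i. s i = (if i \<le> j then i else Suc i)"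
  shows "(\<Sum>i<Suc M. F i *v (Y (Suc i) - Y i))
    = (\<Sum>i<M. F (s i) *v (Y (s (Suc i)) - Y (s i))) + (F (Suc j) - F j) *v (Y (Suc (Suc j)) - Y (Suc j))"
  using \<open>j < M\<close>
proof (induction M)
  case (Suc M)
  show ?case
  proof (cases "j = M")
    case True
    have "(\<Sum>i<M. F (s i) *v (Y (s (Suc i)) - Y (s i))) = (\<Sum>i<M. F i *v (Y (Suc i) - Y i))"
      using True by (intro sum.cong) (auto simp: s)
    then show ?thesis
      using True by (simp add: s matrix_vector_mult_diff_distrib matrix_vector_mult_diff_rdistrib)
  next
    case False
    then show ?thesis using Suc by (simp add: s)
  qed
qed simp

lemma vabs_mult_adjacent_increments_le:
  fixes P :: "real^'h::finite^'d::finite" and Q :: "real^'h"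
  assumes "mabs P \<le> B * a powr \<alpha>" "vabs Q \<le> C * b powr \<alpha>"
    and "0 \<le> a" "0 \<le> b" "a + b \<le> 2 * q" "0 \<le> B" "0 \<le> C" "0 < \<alpha>"
  shows "vabs (P *v Q) \<le> real CARD('h) * B * C * q powr (2 * \<alpha>)"
proof -
  have "vabs (P *v Q) \<le> real CARD('h) * mabs P * vabs Q"
    by (rule vabs_matrix_vector_mult_le)
  also have "\<dots> \<le> real CARD('h) * (B * a powr \<alpha>) * (C * b powr \<alpha>)"
    using assms by (intro mult_mono mult_nonneg_nonneg mabs_nonneg vabs_nonneg) auto
  also have "\<dots> = real CARD('h) * B * C * (a powr \<alpha> * b powr \<alpha>)"
    by simp
  also have "\<dots> \<le> real CARD('h) * B * C * q powr (2 * \<alpha>)"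
    using assms by (intro mult_left_mono powr_mult_le_of_sum_le) auto
  finally show ?thesis .
qed

text \<open>Young's argument: removing a partition point whose neighbours are close costs at most
  \<open>(r / M) powr (2 * \<alpha>)\<close> when \<open>M + 1\<close> intervals are left; \<open>zeta_sum\<close> collects these errors.\<close>
lemma young_loeve_estimate:
  fixes p :: "nat \<Rightarrow> real" and F :: "nat \<Rightarrow> real^'h::finite^'d::finite" and Y :: "nat \<Rightarrow> real^'h"
  assumes "\<And>i. i < m \<Longrightarrow> p i < p (Suc i)"
    and "\<And>i k. i < k \<Longrightarrow> k \<le> m \<Longrightarrow> vabs (Y k - Y i) \<le> C * (p k - p i) powr \<alpha>"
    and "\<And>i k. i < k \<Longrightarrow> k < m \<Longrightarrow> mabs (F k - F i) \<le> B * (p k - p i) powr \<alpha>"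
    and "0 \<le> B" "0 \<le> C" "0 < \<alpha>"
  shows "vabs ((\<Sum>i<m. F i *v (Y (Suc i) - Y i)) - F 0 *v (Y m - Y 0))
     \<le> real CARD('h) * B * C * zeta_sum (2 * \<alpha>) (m - 1) * (p m - p 0) powr (2 * \<alpha>)"
  using assms
proof (induction m arbitrary: p F Y)
  case (Suc M)
  note p_mono = Suc.prems(1) and Y_hoelder = Suc.prems(2) and F_hoelder = Suc.prems(3)
  have nonneg: "0 \<le> B" "0 \<le> C" "0 < \<alpha>" using Suc.prems(4-6) by auto
  define h where "h = real CARD('h)"
  define r where "r = p (Suc M) - p 0"
  have p_less: "p i < p k" if "i < k" "k \<le> Suc M" for i k
  proof (rule lift_Suc_mono_less_ivl[of "{..<Suc M}"])
    show "{i..<k} \<subseteq> {..<Suc M}" using that by auto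
  qed (use that p_mono in auto)
  show ?case
  proof (cases "M = 0")
    case True
    then show ?thesis by (simp add: zeta_sum_def)
  next
    case False
    have "p i \<le> p (Suc i)" if "i \<le> M" for i
      using p_mono[of i] that by simp
    then obtain j where j: "j < M" "p (Suc (Suc j)) - p j \<le> 2 * (r / M)"
      using exists_short_double_step[of M p] False unfolding r_def by blast
    define s where "s i = (if i \<le> j then i else Suc i)" for i
    have s_less: "i < i' \<Longrightarrow> s i < s i'" for i i' by (auto simp: s_def)
    have s_le: "s i \<le> Suc i" for i by (auto simp: s_def)
    have IH: "vabs ((\<Sum>i<M. (F \<circ> s) i *v ((Y \<circ> s) (Suc i) - (Y \<circ> s) i)) - (F \<circ> s) 0 *v ((Y \<circ> s) M - (Y \<circ> s) 0))
       \<le> h * B * C * zeta_sum (2 * \<alpha>) (M - 1) * ((p \<circ> s) M - (p \<circ> s) 0) powr (2 * \<alpha>)"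
      unfolding h_def
    proof (rule Suc.IH)
      show "(p \<circ> s) i < (p \<circ> s) (Suc i)" if "i < M" for i
        using that p_less[of "s i" "s (Suc i)"] s_less[of i "Suc i"] s_le[of "Suc i"] by simp
      show "vabs ((Y \<circ> s) k - (Y \<circ> s) i) \<le> C * ((p \<circ> s) k - (p \<circ> s) i) powr \<alpha>"
        if "i < k" "k \<le> M" for i k
        using that Y_hoelder[of "s i" "s k"] s_less[of i k] s_le[of k] by simp
      show "mabs ((F \<circ> s) k - (F \<circ> s) i) \<le> B * ((p \<circ> s) k - (p \<circ> s) i) powr \<alpha>"
        if "i < k" "k < M" for i k
        using that F_hoelder[of "s i" "s k"] s_less[of i k] s_le[of k] by simp
    qed (use nonneg in auto)
    have s_ends: "s 0 = 0" "s M = Suc M" using j by (auto simp: s_def)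
    define E where "E = (F (Suc j) - F j) *v (Y (Suc (Suc j)) - Y (Suc j))"
    have "vabs E \<le> h * B * C * (r / M) powr (2 * \<alpha>)"
      unfolding E_def h_def
      using F_hoelder[of j "Suc j"] Y_hoelder[of "Suc j" "Suc (Suc j)"] j nonneg
        p_less[of j "Suc j"] p_less[of "Suc j" "Suc (Suc j)"]
      by (intro vabs_mult_adjacent_increments_le[where a="p (Suc j) - p j" and b="p (Suc (Suc j)) - p (Suc j)"])
        auto
    also have "\<dots> = h * B * C * (r powr (2 * \<alpha>) / real M powr (2 * \<alpha>))"
      using p_less[of 0 "Suc M"] by (simp add: r_def powr_divide)
    finally have E: "vabs E \<le> h * B * C * (r powr (2 * \<alpha>) / real M powr (2 * \<alpha>))" .
    have split: "(\<Sum>i<Suc M. F i *v (Y (Suc i) - Y i)) - F 0 *v (Y (Suc M) - Y 0)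
        = ((\<Sum>i<M. (F \<circ> s) i *v ((Y \<circ> s) (Suc i) - (Y \<circ> s) i)) - (F \<circ> s) 0 *v ((Y \<circ> s) M - (Y \<circ> s) 0)) + E"
      using riemann_sum_remove_point[of j M s F Y, OF j(1) s_def] s_ends by (simp add: E_def)
    have "vabs ((\<Sum>i<Suc M. F i *v (Y (Suc i) - Y i)) - F 0 *v (Y (Suc M) - Y 0))
        \<le> vabs ((\<Sum>i<M. (F \<circ> s) i *v ((Y \<circ> s) (Suc i) - (Y \<circ> s) i)) - (F \<circ> s) 0 *v ((Y \<circ> s) M - (Y \<circ> s) 0)) + vabs E"
      unfolding split by (rule vabs_triangle)
    also have "\<dots> \<le> h * B * C * zeta_sum (2 * \<alpha>) (M - 1) * r powr (2 * \<alpha>) + h * B * C * (r powr (2 * \<alpha>) / real M powr (2 * \<alpha>))"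
      using IH E s_ends by (simp add: r_def)
    also have "\<dots> = h * B * C * zeta_sum (2 * \<alpha>) M * r powr (2 * \<alpha>)"
      using zeta_sum_Suc[of "2 * \<alpha>" "M - 1"] False by (simp add: algebra_simps)
    finally show ?thesis by (simp add: h_def r_def)
  qed
qed simp

section \<open>Linear interpolation on the dyadic grid\<close>

lemma grid_zero [simp]: "grid n 0 = 0"
  by (simp add: grid_def)

lemma grid_top: "grid n (2 ^ n) = 1"
  by (simp add: grid_def)

lemma grid_le_iff: "grid n j \<le> grid n k \<longleftrightarrow> j \<le> k"
  by (simp add: grid_def divide_le_cancel)

lemma grid_less_iff: "grid n j < grid n k \<longleftrightarrow> j < k"
  by (simp add: grid_def divide_less_cancel)

lemma grid_nonneg: "0 \<le> grid n k"
  by (simp add: grid_def)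

lemma grid_le_one: "k \<le> 2 ^ n \<Longrightarrow> grid n k \<le> 1"
  by (simp add: grid_def)

lemma grid_Suc: "grid n (Suc k) = grid n k + 1 / 2 ^ n"
  by (simp add: grid_def add_divide_distrib)

definition cell :: "nat \<Rightarrow> real \<Rightarrow> nat" where
  "cell n t = nat \<lfloor>t * 2 ^ n\<rfloor>"

definition grid_interp :: "nat \<Rightarrow> (nat \<Rightarrow> 'a::real_vector) \<Rightarrow> real \<Rightarrow> 'a" where
  "grid_interp n \<phi> t = \<phi> (cell n t) + (t * 2 ^ n - real (cell n t)) *\<^sub>R (\<phi> (Suc (cell n t)) - \<phi> (cell n t))"

lemma cell_grid: "cell n (grid n k) = k"
  by (simp add: cell_def grid_def)

lemma cell_bounds:
  assumes "0 \<le> t"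
  shows "grid n (cell n t) \<le> t" "t < grid n (Suc (cell n t))"
proof -
  have "real (cell n t) = of_int \<lfloor>t * 2 ^ n\<rfloor>"
    using assms by (simp add: cell_def)
  moreover have "of_int \<lfloor>t * 2 ^ n\<rfloor> \<le> t * 2 ^ n" "t * 2 ^ n < of_int \<lfloor>t * 2 ^ n\<rfloor> + 1"
    by linarith+
  ultimately show "grid n (cell n t) \<le> t" "t < grid n (Suc (cell n t))"
    by (simp_all add: grid_def field_simps)
qed

lemma cell_less: "0 \<le> t \<Longrightarrow> t < 1 \<Longrightarrow> cell n t < 2 ^ n"
  using cell_bounds(1)[of t n] grid_le_iff[of n "2 ^ n" "cell n t"] by (auto simp: grid_top)

lemma exists_left_open_cell:
  assumes "0 < v" "v \<le> 1"
  obtains b where "grid n b < v" "v \<le> grid n (Suc b)" "b < 2 ^ n"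
proof -
  define c where "c = \<lceil>v * 2 ^ n\<rceil>"
  have c: "of_int c - 1 < v * 2 ^ n" "v * 2 ^ n \<le> of_int c"
    using ceiling_correct[of "v * 2 ^ n"] by (auto simp: c_def)
  have "0 < v * 2 ^ n" using assms by simp
  then have "(0::real) < of_int c" using c by linarith
  then have "1 \<le> c" by simp
  have "c \<le> 2 ^ n" unfolding c_def using assms by (simp add: ceiling_le_iff)
  define b where "b = nat (c - 1)"
  have b: "real b = of_int c - 1" using \<open>1 \<le> c\<close> by (simp add: b_def)
  show ?thesis
  proof
    show "grid n b < v" "v \<le> grid n (Suc b)" using c b by (simp_all add: grid_def field_simps)
    show "b < 2 ^ n" using \<open>1 \<le> c\<close> \<open>c \<le> 2 ^ n\<close> by (simp add: b_def nat_less_iff)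
  qed
qed

lemma grid_interp_cell:
  assumes "grid n k \<le> t" "t \<le> grid n (Suc k)"
  shows "grid_interp n \<phi> t = \<phi> k + (t * 2 ^ n - real k) *\<^sub>R (\<phi> (Suc k) - \<phi> k)"
proof -
  have t: "real k \<le> t * 2 ^ n" "t * 2 ^ n \<le> real k + 1"
    using assms by (simp_all add: grid_def field_simps)
  show ?thesis
  proof (cases "t * 2 ^ n = real k + 1")
    case True
    then have "cell n t = Suc k" by (simp add: cell_def)
    then show ?thesis using True by (simp add: grid_interp_def)
  next
    case False
    then have "\<lfloor>t * 2 ^ n\<rfloor> = int k" using t by (simp add: floor_eq_iff)
    then show ?thesis by (simp add: grid_interp_def cell_def)
  qed
qed

lemma grid_interp_grid: "grid_interp n \<phi> (grid n k) = \<phi> k"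
  by (simp add: grid_interp_def cell_grid) (simp add: grid_def)

lemma grid_interp_diff_cell:
  assumes "grid n k \<le> s" "s \<le> t" "t \<le> grid n (Suc k)"
  shows "grid_interp n \<phi> t - grid_interp n \<phi> s = ((t - s) * 2 ^ n) *\<^sub>R (\<phi> (Suc k) - \<phi> k)"
proof -
  have "grid_interp n \<phi> t - grid_interp n \<phi> s
      = ((t * 2 ^ n - real k) - (s * 2 ^ n - real k)) *\<^sub>R (\<phi> (Suc k) - \<phi> k)"
    using grid_interp_cell[of n k t \<phi>] grid_interp_cell[of n k s \<phi>] assms
    by (simp add: scaleR_diff_left)
  then show ?thesis by (simp add: left_diff_distrib)
qed

lemma vabs_convex_comb_le:
  assumes "0 \<le> \<mu>" "\<mu> \<le> 1" "vabs P \<le> C * A powr \<alpha>" "vabs Q \<le> C * B powr \<alpha>"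
    "0 \<le> A" "0 \<le> B" "0 < \<alpha>" "\<alpha> \<le> 1" "0 \<le> C"
  shows "vabs ((1 - \<mu>) *\<^sub>R P + \<mu> *\<^sub>R Q) \<le> C * ((1 - \<mu>) * A + \<mu> * B) powr \<alpha>"
proof -
  have "vabs ((1 - \<mu>) *\<^sub>R P + \<mu> *\<^sub>R Q) \<le> (1 - \<mu>) * vabs P + \<mu> * vabs Q"
    using vabs_triangle[of "(1 - \<mu>) *\<^sub>R P" "\<mu> *\<^sub>R Q"] vabs_scaleR_le[of "1 - \<mu>" P]
      vabs_scaleR_le[of \<mu> Q] assms(1,2) by simp
  also have "\<dots> \<le> (1 - \<mu>) * (C * A powr \<alpha>) + \<mu> * (C * B powr \<alpha>)"
    using assms by (intro add_mono mult_left_mono) auto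
  also have "\<dots> = C * ((1 - \<mu>) * A powr \<alpha> + \<mu> * B powr \<alpha>)"
    by (simp add: algebra_simps)
  also have "\<dots> \<le> C * ((1 - \<mu>) * A + \<mu> * B) powr \<alpha>"
    using assms by (intro mult_left_mono powr_concave) auto
  finally show ?thesis .
qed

context
  fixes \<phi> :: "nat \<Rightarrow> real^'h::finite" and n :: nat and C \<alpha> :: real
  assumes \<phi>_hoelder: "\<And>j k. j \<le> 2 ^ n \<Longrightarrow> k \<le> 2 ^ n \<Longrightarrow> vabs (\<phi> j - \<phi> k) \<le> C * \<bar>grid n j - grid n k\<bar> powr \<alpha>"
    and C_nonneg: "0 \<le> C" and \<alpha>: "0 < \<alpha>" "\<alpha> \<le> 1"
begin

lemma grid_interp_lipschitz_cell:
  assumes "grid n k \<le> s" "s \<le> t" "t \<le> grid n (Suc k)" "Suc k \<le> 2 ^ n"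
  shows "vabs (grid_interp n \<phi> t - grid_interp n \<phi> s) \<le> (t - s) * 2 ^ n * (C * (1 / 2 ^ n) powr \<alpha>)"
proof -
  have "vabs (grid_interp n \<phi> t - grid_interp n \<phi> s) \<le> \<bar>(t - s) * 2 ^ n\<bar> * vabs (\<phi> (Suc k) - \<phi> k)"
    unfolding grid_interp_diff_cell[OF assms(1-3)] by (rule vabs_scaleR_le)
  also have "\<dots> \<le> (t - s) * 2 ^ n * (C * (1 / 2 ^ n) powr \<alpha>)"
    using \<phi>_hoelder[of "Suc k" k] assms by (simp add: grid_Suc mult_left_mono)
  finally show ?thesis .
qed

lemma grid_interp_hoelder_from_grid:
  assumes "k \<le> 2 ^ n" "grid n k \<le> v" "v \<le> 1"
  shows "vabs (grid_interp n \<phi> v - \<phi> k) \<le> C * (v - grid n k) powr \<alpha>"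
proof (cases "v = 1")
  case True
  then show ?thesis
    using \<phi>_hoelder[of "2 ^ n" k] grid_interp_grid[of n \<phi> "2 ^ n"] assms by (simp add: grid_top)
next
  case False
  define b where "b = cell n v"
  have v0: "0 \<le> v" using assms grid_nonneg order_trans by blast
  have b: "grid n b \<le> v" "v < grid n (Suc b)" using cell_bounds[OF v0] by (auto simp: b_def)
  have "b < 2 ^ n" using cell_less[OF v0] False assms by (simp add: b_def)
  have "grid n k < grid n (Suc b)" using assms(2) b(2) by linarith
  then have "k \<le> b" by (simp add: grid_less_iff)
  define \<mu> where "\<mu> = v * 2 ^ n - real b"
  have \<mu>: "0 \<le> \<mu>" "\<mu> \<le> 1" using b by (simp_all add: \<mu>_def grid_def field_simps)
  have "grid_interp n \<phi> v - \<phi> k = (1 - \<mu>) *\<^sub>R (\<phi> b - \<phi> k) + \<mu> *\<^sub>R (\<phi> (Suc b) - \<phi> k)"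
    using grid_interp_cell[of n b v \<phi>] b by (simp add: \<mu>_def algebra_simps)
  also have "vabs \<dots> \<le> C * ((1 - \<mu>) * (grid n b - grid n k) + \<mu> * (grid n (Suc b) - grid n k)) powr \<alpha>"
    using \<phi>_hoelder[of b k] \<phi>_hoelder[of "Suc b" k] \<open>b < 2 ^ n\<close> \<open>k \<le> b\<close> \<mu> \<alpha> C_nonneg assms(1)
    by (intro vabs_convex_comb_le) (auto simp: grid_le_iff)
  also have "(1 - \<mu>) * (grid n b - grid n k) + \<mu> * (grid n (Suc b) - grid n k) = v - grid n k"
    by (simp add: \<mu>_def grid_Suc grid_def field_simps)
  finally show ?thesis .
qed

lemma grid_interp_hoelder:
  assumes "0 \<le> u" "u \<le> v" "v \<le> 1"
  shows "vabs (grid_interp n \<phi> v - grid_interp n \<phi> u) \<le> C * (v - u) powr \<alpha>"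
proof (cases "u = v")
  case False
  define a where "a = cell n u"
  have a: "grid n a \<le> u" "u < grid n (Suc a)" using cell_bounds[OF assms(1)] by (auto simp: a_def)
  have "a < 2 ^ n" using cell_less[OF assms(1)] False assms by (simp add: a_def)
  show ?thesis
  proof (cases "v \<le> grid n (Suc a)")
    case True
    define s where "s = (v - u) * 2 ^ n"
    have s: "0 \<le> s" "s \<le> 1" using assms a True by (simp_all add: s_def grid_def field_simps)
    have "vabs (grid_interp n \<phi> v - grid_interp n \<phi> u) \<le> s * (C * (1 / 2 ^ n) powr \<alpha>)"
      using grid_interp_lipschitz_cell[of a u v] a True assms \<open>a < 2 ^ n\<close> by (simp add: s_def)
    also have "\<dots> \<le> s powr \<alpha> * (C * (1 / 2 ^ n) powr \<alpha>)"
      using s \<alpha> C_nonneg by (intro mult_right_mono self_le_powr) auto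
    also have "\<dots> = C * (v - u) powr \<alpha>"
      using s powr_mult[of s "1 / 2 ^ n" \<alpha>] by (simp add: s_def)
    finally show ?thesis .
  next
    case False
    define w where "w = u * 2 ^ n - real a"
    have w: "0 \<le> w" "w \<le> 1" using a by (simp_all add: w_def grid_def field_simps)
    have "grid_interp n \<phi> v - grid_interp n \<phi> u
        = (1 - w) *\<^sub>R (grid_interp n \<phi> v - \<phi> a) + w *\<^sub>R (grid_interp n \<phi> v - \<phi> (Suc a))"
      using grid_interp_cell[of n a u \<phi>] a by (simp add: w_def algebra_simps)
    also have "vabs \<dots> \<le> C * ((1 - w) * (v - grid n a) + w * (v - grid n (Suc a))) powr \<alpha>"
      using w \<alpha> C_nonneg False a assms \<open>a < 2 ^ n\<close>
      by (intro vabs_convex_comb_le grid_interp_hoelder_from_grid) auto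
    also have "(1 - w) * (v - grid n a) + w * (v - grid n (Suc a)) = v - u"
      by (simp add: w_def grid_Suc grid_def field_simps)
    finally show ?thesis .
  qed
qed (use C_nonneg in simp)

end

section \<open>Hoelder bound for the Euler scheme\<close>

text \<open>\<open>K\<close> bounds the Young--Loeve constants \<open>1 + zeta_sum (2 * \<alpha>) m\<close>, and \<open>N\<close> is chosen so that
  on scales up to \<open>1 / N\<close> the Young--Loeve error is dominated by the first-order term
  (\<open>small_scale\<close>).\<close>
locale euler_scheme =
  fixes x :: "real \<Rightarrow> real^'h::finite" and f :: "real^'d::finite \<Rightarrow> real^'h^'d"
    and y0 :: "real^'d" and n :: nat and \<alpha> C nf ndf \<kappa> K :: real and N :: nat
  assumes alpha: "0 < \<alpha>" "\<alpha> \<le> 1" and C_pos: "0 < C"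
    and x_hoelder: "\<And>s t. s \<in> {0..1} \<Longrightarrow> t \<in> {0..1} \<Longrightarrow> vabs (x t - x s) \<le> C * \<bar>t - s\<bar> powr \<alpha>"
    and f_bound: "\<And>w. mabs (f w) \<le> nf"
    and f_lipschitz: "\<And>a b. mabs (f a - f b) \<le> real CARD('d) * ndf * vabs (a - b)"
    and ndf_nonneg: "0 \<le> ndf" and kappa_def: "\<kappa> = real CARD('h) * real CARD('d) * ndf * C"
    and zeta_sum_le: "\<And>m. 1 + zeta_sum (2 * \<alpha>) m \<le> K"
    and N_large: "2 * \<kappa> * K \<le> real N powr \<alpha>"
    and N_pos: "0 < N"
begin

abbreviation "e \<equiv> euler f x y0 n"
abbreviation "X \<equiv> grid_interp n (\<lambda>k. x (grid n k))"
abbreviation "z \<equiv> grid_interp n e"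

lemma nf_nonneg: "0 \<le> nf"
  using f_bound[of 0] mabs_nonneg order_trans by blast

lemma kappa_nonneg: "0 \<le> \<kappa>"
  using ndf_nonneg C_pos by (simp add: kappa_def)

lemma K_ge_one: "1 \<le> K"
  using zeta_sum_le[of 0] by (simp add: zeta_sum_def)

lemma small_scale:
  assumes "0 \<le> r" "r \<le> 1 / real N"
  shows "2 * \<kappa> * K * r powr \<alpha> \<le> 1"
proof -
  have "r powr \<alpha> \<le> 1 / real N powr \<alpha>"
    using assms alpha N_pos powr_mono2[of \<alpha> r "1 / real N"] by (simp add: powr_divide)
  then have "2 * \<kappa> * K * r powr \<alpha> \<le> 2 * \<kappa> * K * (1 / real N powr \<alpha>)"
    using kappa_nonneg K_ge_one by (intro mult_left_mono) auto
  also have "\<dots> \<le> 1"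
    using N_large N_pos by (simp add: field_simps)
  finally show ?thesis .
qed

lemma x_grid_hoelder:
  "j \<le> 2 ^ n \<Longrightarrow> k \<le> 2 ^ n \<Longrightarrow> vabs (x (grid n j) - x (grid n k)) \<le> C * \<bar>grid n j - grid n k\<bar> powr \<alpha>"
  by (rule x_hoelder) (auto simp: grid_nonneg grid_le_one)

lemma X_hoelder: "0 \<le> u \<Longrightarrow> u \<le> v \<Longrightarrow> v \<le> 1 \<Longrightarrow> vabs (X v - X u) \<le> C * (v - u) powr \<alpha>"
  by (rule grid_interp_hoelder) (use x_grid_hoelder C_pos alpha in auto)

lemma X_lipschitz_cell:
  "grid n k \<le> s \<Longrightarrow> s \<le> t \<Longrightarrow> t \<le> grid n (Suc k) \<Longrightarrow> Suc k \<le> 2 ^ n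
    \<Longrightarrow> vabs (X t - X s) \<le> (t - s) * 2 ^ n * (C * (1 / 2 ^ n) powr \<alpha>)"
  by (rule grid_interp_lipschitz_cell) (use x_grid_hoelder C_pos alpha in auto)

lemma vabs_f_mult_le: "vabs (f a *v w) \<le> real CARD('h) * nf * vabs w"
proof -
  have "real CARD('h) * mabs (f a) * vabs w \<le> real CARD('h) * nf * vabs w"
    using f_bound[of a] by (intro mult_right_mono mult_left_mono vabs_nonneg) auto
  then show ?thesis using vabs_matrix_vector_mult_le[of "f a" w] by linarith
qed

lemma z_grid: "z (grid n k) = e k"
  by (rule grid_interp_grid)

lemma z_diff_cell:
  assumes "grid n k \<le> s" "s \<le> t" "t \<le> grid n (Suc k)"
  shows "z t - z s = f (e k) *v (X t - X s)"
  using grid_interp_diff_cell[OF assms, of e] grid_interp_diff_cell[OF assms, of "\<lambda>k. x (grid n k)"]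
  by (simp add: matrix_vector_mult_scaleR)

lemma euler_step_le:
  assumes "Suc k \<le> 2 ^ n"
  shows "vabs (e (Suc k) - e k) \<le> real CARD('h) * nf * (C * (1 / 2 ^ n) powr \<alpha>)"
proof -
  have "vabs (e (Suc k) - e k) \<le> real CARD('h) * nf * vabs (x (grid n (Suc k)) - x (grid n k))"
    using vabs_f_mult_le by simp
  also have "\<dots> \<le> real CARD('h) * nf * (C * (1 / 2 ^ n) powr \<alpha>)"
    using x_grid_hoelder[of "Suc k" k] assms nf_nonneg by (intro mult_left_mono) (auto simp: grid_Suc)
  finally show ?thesis .
qed

text \<open>The Euler increments from the grid point \<open>k\<close> to \<open>v\<close> form a Riemann--Stieltjes sum for
  the partition by the intermediate grid points; the Young--Loeve estimate bounds its deviation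
  from the first-order term.\<close>
lemma euler_interp_remainder_le:
  assumes "k \<le> b" "b < 2 ^ n" "grid n b < v" "v \<le> grid n (Suc b)"
    and e_hoelder: "\<And>i j. k \<le> i \<Longrightarrow> i < j \<Longrightarrow> j \<le> b
      \<Longrightarrow> vabs (e j - e i) \<le> 2 * real CARD('h) * nf * C * (grid n j - grid n i) powr \<alpha>"
  shows "vabs ((z v - e k) - f (e k) *v (X v - X (grid n k)))
    \<le> 2 * \<kappa> * zeta_sum (2 * \<alpha>) (b - k) * (v - grid n k) powr \<alpha>
      * (real CARD('h) * nf * C * (v - grid n k) powr \<alpha>)"
proof -
  define m where "m = Suc b - k"
  define p where "p i = (if i < m then grid n (k + i) else v)" for i
  define F where "F i = f (e (k + i))" for i
  define B where "B = real CARD('d) * ndf * (2 * real CARD('h) * nf * C)"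
  have p_ends: "p 0 = grid n k" "p m = v" using assms(1) by (auto simp: p_def m_def)
  have v_le_one: "v \<le> 1" using assms(2,4) grid_le_one[of "Suc b" n] by simp
  have v_pos: "0 < v" using assms(3) grid_nonneg[of n b] by linarith
  have p_cell: "p i = grid n (k + i) \<and> p i < p (Suc i) \<and> p (Suc i) \<le> grid n (Suc (k + i))"
    if "i < m" for i
  proof (cases "Suc i < m")
    case True
    then show ?thesis using that by (simp add: p_def grid_less_iff)
  next
    case False
    then have "k + i = b" using that by (simp add: m_def)
    then show ?thesis using that False assms(3,4) by (simp add: p_def)
  qed
  have p_mono: "p i \<le> p j" if "i \<le> j" "j \<le> m" for i j
  proof (cases "j < m")
    case True
    then show ?thesis using that by (simp add: p_def grid_le_iff)
  next
    case False
    have "grid n (k + i) \<le> grid n b" if "i < m" using that by (simp add: grid_le_iff m_def)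
    then show ?thesis using False that assms(3) by (auto simp: p_def)
  qed
  have p_range: "0 \<le> p i \<and> p i \<le> 1" for i
    using assms(1,2) v_le_one v_pos grid_nonneg[of n] grid_le_one[of "k + i" n]
    by (auto simp: p_def m_def)
  have "F i *v (X (p (Suc i)) - X (p i)) = z (p (Suc i)) - z (p i)" if "i < m" for i
    using z_diff_cell[of "k + i" "p i" "p (Suc i)"] p_cell[OF that] by (simp add: F_def)
  then have "(\<Sum>i<m. F i *v (X (p (Suc i)) - X (p i))) = (\<Sum>i<m. z (p (Suc i)) - z (p i))"
    by (intro sum.cong) auto
  also have "\<dots> = z v - e k"
    using sum_lessThan_telescope[of "\<lambda>i. z (p i)" m] by (simp add: p_ends z_grid)
  finally have sum_eq: "(\<Sum>i<m. F i *v (X (p (Suc i)) - X (p i))) = z v - e k" .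
  have "vabs ((\<Sum>i<m. F i *v (X (p (Suc i)) - X (p i))) - F 0 *v (X (p m) - X (p 0)))
      \<le> real CARD('h) * B * C * zeta_sum (2 * \<alpha>) (m - 1) * (p m - p 0) powr (2 * \<alpha>)"
  proof (rule young_loeve_estimate)
    show "p i < p (Suc i)" if "i < m" for i using p_cell[OF that] by simp
    show "vabs (X (p j) - X (p i)) \<le> C * (p j - p i) powr \<alpha>" if "i < j" "j \<le> m" for i j
      using X_hoelder p_range p_mono that by simp
    show "mabs (F j - F i) \<le> B * (p j - p i) powr \<alpha>" if "i < j" "j < m" for i j
    proof -
      have "mabs (F j - F i) \<le> real CARD('d) * ndf * vabs (e (k + j) - e (k + i))"
        unfolding F_def by (rule f_lipschitz)
      also have "\<dots> \<le> real CARD('d) * ndf * (2 * real CARD('h) * nf * C * (grid n (k + j) - grid n (k + i)) powr \<alpha>)"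
        using e_hoelder[of "k + i" "k + j"] that ndf_nonneg by (intro mult_left_mono) (auto simp: m_def)
      finally show ?thesis using that by (simp add: B_def p_def)
    qed
  qed (use ndf_nonneg nf_nonneg C_pos alpha in \<open>auto simp: B_def\<close>)
  also have "m - 1 = b - k" using assms(1) by (simp add: m_def)
  also have "(p m - p 0) powr (2 * \<alpha>) = (v - grid n k) powr \<alpha> * (v - grid n k) powr \<alpha>"
    unfolding p_ends by (simp only: mult_2 powr_add)
  finally show ?thesis
    unfolding sum_eq p_ends by (simp add: B_def F_def kappa_def algebra_simps)
qed

text \<open>Induction on the number of cells: the Hoelder bound between grid points that the remainder
  estimate needs comes from shorter intervals.\<close>
lemma euler_interp_hoelder_from_grid:
  assumes "k \<le> b" "b < 2 ^ n" "grid n b < v" "v \<le> grid n (Suc b)" "v - grid n k \<le> 1 / real N"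
  shows "vabs (z v - e k) \<le> 2 * real CARD('h) * nf * C * (v - grid n k) powr \<alpha>"
  using assms
proof (induction "b - k" arbitrary: k b v rule: less_induct)
  case less
  define r where "r = v - grid n k"
  define Q where "Q = real CARD('h) * nf * C * r powr \<alpha>"
  have r: "0 \<le> r" "r \<le> 1 / real N"
    using less.prems grid_le_iff[of n k b] by (auto simp: r_def)
  have Q: "0 \<le> Q" using nf_nonneg C_pos by (simp add: Q_def)
  have "vabs ((z v - e k) - f (e k) *v (X v - X (grid n k)))
      \<le> 2 * \<kappa> * zeta_sum (2 * \<alpha>) (b - k) * r powr \<alpha> * Q"
    unfolding r_def Q_def
  proof (rule euler_interp_remainder_le[OF less.prems(1-4)])
    fix i j assume ij: "k \<le> i" "i < j" "j \<le> b"
    have "grid n j \<le> grid n b" "grid n k \<le> grid n i" using ij by (simp_all add: grid_le_iff)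
    then have "vabs (z (grid n j) - e i) \<le> 2 * real CARD('h) * nf * C * (grid n j - grid n i) powr \<alpha>"
      using ij less.prems by (intro less.hyps[of "j - 1" i]) (auto simp: grid_less_iff)
    then show "vabs (e j - e i) \<le> 2 * real CARD('h) * nf * C * (grid n j - grid n i) powr \<alpha>"
      by (simp add: z_grid)
  qed
  also have "\<dots> \<le> 1 * Q"
  proof (intro mult_right_mono Q)
    show "2 * \<kappa> * zeta_sum (2 * \<alpha>) (b - k) * r powr \<alpha> \<le> 1"
      using small_scale[OF r] zeta_sum_le[of "b - k"] kappa_nonneg
      by (smt (verit) mult_left_mono mult_right_mono powr_ge_zero)
  qed
  finally have remainder: "vabs ((z v - e k) - f (e k) *v (X v - X (grid n k))) \<le> Q" by simp
  have "vabs (f (e k) *v (X v - X (grid n k))) \<le> real CARD('h) * nf * vabs (X v - X (grid n k))"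
    by (rule vabs_f_mult_le)
  also have "\<dots> \<le> Q"
    using X_hoelder[of "grid n k" v] less.prems r nf_nonneg grid_nonneg[of n k] grid_le_one[of "Suc b" n]
    by (auto simp: Q_def r_def intro!: mult_left_mono)
  finally have "vabs (z v - e k) \<le> Q + Q"
    using vabs_triangle[of "f (e k) *v (X v - X (grid n k))" "(z v - e k) - f (e k) *v (X v - X (grid n k))"]
      remainder by simp
  then show ?case by (simp add: Q_def r_def mult_ac)
qed

lemma euler_local_hoelder_grid:
  assumes "i < j" "j \<le> 2 ^ n" "grid n j - grid n i \<le> 1 / real N"
  shows "vabs (e j - e i) \<le> 2 * real CARD('h) * nf * C * (grid n j - grid n i) powr \<alpha>"
  using euler_interp_hoelder_from_grid[of i "j - 1" "grid n j"] assms
  by (simp add: z_grid grid_less_iff)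

lemma euler_interp_hoelder_within_mesh:
  assumes "0 \<le> u" "u \<le> v" "v \<le> 1" "v - u \<le> 1 / 2 ^ n"
  shows "vabs (z v - z u) \<le> real CARD('h) * nf * C * (v - u) powr \<alpha>"
proof (cases "u = v")
  case False
  define L where "L = real CARD('h) * nf * (C * (1 / 2 ^ n) powr \<alpha>) * 2 ^ n"
  define a where "a = cell n u"
  define t1 where "t1 = grid n (Suc a)"
  have a: "grid n a \<le> u" "u < t1" using cell_bounds[OF assms(1)] by (auto simp: a_def t1_def)
  have "a < 2 ^ n" using cell_less[OF assms(1)] False assms by (simp add: a_def)
  have piece: "vabs (z t - z s) \<le> L * (t - s)"
    if "grid n k \<le> s" "s \<le> t" "t \<le> grid n (Suc k)" "Suc k \<le> 2 ^ n" for k s t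
  proof -
    have "vabs (z t - z s) \<le> real CARD('h) * nf * vabs (X t - X s)"
      unfolding z_diff_cell[OF that(1-3)] by (rule vabs_f_mult_le)
    also have "\<dots> \<le> real CARD('h) * nf * ((t - s) * 2 ^ n * (C * (1 / 2 ^ n) powr \<alpha>))"
      using X_lipschitz_cell[OF that] nf_nonneg by (intro mult_left_mono) auto
    finally show ?thesis by (simp add: L_def algebra_simps)
  qed
  have "vabs (z v - z u) \<le> L * (v - u)"
  proof (cases "v \<le> t1")
    case True
    then show ?thesis using piece[of a u v] a assms \<open>a < 2 ^ n\<close> by (simp add: t1_def)
  next
    case False
    have "v \<le> grid n (Suc (Suc a))" using a assms(4) by (simp add: grid_Suc t1_def)
    moreover have "Suc (Suc a) \<le> 2 ^ n"
      using False assms(3) grid_less_iff[of n "Suc a" "2 ^ n"] by (simp add: grid_top t1_def)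
    ultimately have "vabs (z v - z t1) \<le> L * (v - t1)" "vabs (z t1 - z u) \<le> L * (t1 - u)"
      using piece[of "Suc a" t1 v] piece[of a u t1] a False \<open>a < 2 ^ n\<close> by (simp_all add: t1_def)
    then show ?thesis
      using vabs_triangle[of "z v - z t1" "z t1 - z u"] by (simp add: algebra_simps)
  qed
  also have "L * (v - u) = real CARD('h) * nf * C * (((v - u) * 2 ^ n) * (1 / 2 ^ n) powr \<alpha>)"
    by (simp add: L_def)
  also have "\<dots> \<le> real CARD('h) * nf * C * (((v - u) * 2 ^ n) powr \<alpha> * (1 / 2 ^ n) powr \<alpha>)"
    using assms nf_nonneg C_pos alpha
    by (intro mult_left_mono mult_right_mono self_le_powr) (auto simp: field_simps)
  also have "((v - u) * 2 ^ n) powr \<alpha> * (1 / 2 ^ n) powr \<alpha> = (v - u) powr \<alpha>"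
    using assms by (simp flip: powr_mult)
  finally show ?thesis .
qed simp

lemma euler_cell_correction_le:
  assumes "grid n a \<le> u" "u \<le> grid n (Suc a)" "Suc a \<le> 2 ^ n" "1 / 2 ^ n \<le> r" "grid n (Suc a) - u \<le> r"
  shows "vabs ((f (e a) - f (e (Suc a))) *v (X (grid n (Suc a)) - X u))
    \<le> \<kappa> * r powr \<alpha> * (real CARD('h) * nf * C * r powr \<alpha>)"
proof -
  have "vabs (e (Suc a) - e a) \<le> real CARD('h) * nf * (C * (1 / 2 ^ n) powr \<alpha>)"
    by (rule euler_step_le[OF assms(3)])
  also have "\<dots> \<le> real CARD('h) * nf * (C * r powr \<alpha>)"
    using assms(4) alpha nf_nonneg C_pos by (intro mult_left_mono powr_mono2) auto
  finally have "real CARD('d) * ndf * vabs (e a - e (Suc a))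
      \<le> real CARD('d) * ndf * (real CARD('h) * nf * (C * r powr \<alpha>))"
    unfolding vabs_minus_commute[of "e a"] using ndf_nonneg
    by (intro mult_left_mono) (auto simp del: euler.simps)
  with f_lipschitz[of "e a" "e (Suc a)"]
  have F: "mabs (f (e a) - f (e (Suc a))) \<le> real CARD('d) * ndf * (real CARD('h) * nf * (C * r powr \<alpha>))"
    by linarith
  have "vabs (X (grid n (Suc a)) - X u) \<le> C * (grid n (Suc a) - u) powr \<alpha>"
    using X_hoelder assms grid_nonneg[of n a] grid_le_one[of "Suc a" n] by simp
  also have "\<dots> \<le> C * r powr \<alpha>"
    using assms C_pos alpha by (intro mult_left_mono powr_mono2) auto
  finally have X: "vabs (X (grid n (Suc a)) - X u) \<le> C * r powr \<alpha>" .
  have "vabs ((f (e a) - f (e (Suc a))) *v (X (grid n (Suc a)) - X u))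
      \<le> real CARD('h) * mabs (f (e a) - f (e (Suc a))) * vabs (X (grid n (Suc a)) - X u)"
    by (rule vabs_matrix_vector_mult_le)
  also have "\<dots> \<le> real CARD('h) * (real CARD('d) * ndf * (real CARD('h) * nf * (C * r powr \<alpha>))) * (C * r powr \<alpha>)"
    using F X ndf_nonneg nf_nonneg C_pos
    by (intro mult_mono mult_left_mono mult_nonneg_nonneg mabs_nonneg vabs_nonneg) auto
  finally show ?thesis by (simp add: kappa_def algebra_simps)
qed

lemma euler_interp_remainder_local_le:
  assumes "grid n k < v" "v \<le> 1" "v - grid n k \<le> 1 / real N"
  shows "vabs ((z v - e k) - f (e k) *v (X v - X (grid n k)))
    \<le> 2 * \<kappa> * (K - 1) * (v - grid n k) powr \<alpha> * (real CARD('h) * nf * C * (v - grid n k) powr \<alpha>)"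
proof -
  have "0 < v" using assms(1) grid_nonneg[of n k] by linarith
  then obtain b where b: "grid n b < v" "v \<le> grid n (Suc b)" "b < 2 ^ n"
    using exists_left_open_cell assms(2) by blast
  have "k \<le> b" using assms(1) b(2) grid_less_iff[of n k "Suc b"] by simp
  have "vabs ((z v - e k) - f (e k) *v (X v - X (grid n k)))
      \<le> 2 * \<kappa> * zeta_sum (2 * \<alpha>) (b - k) * (v - grid n k) powr \<alpha>
        * (real CARD('h) * nf * C * (v - grid n k) powr \<alpha>)"
  proof (rule euler_interp_remainder_le[OF \<open>k \<le> b\<close> b(3,1,2)])
    fix i j assume "k \<le> i" "i < j" "j \<le> b"
    moreover have "grid n j \<le> grid n b" "grid n k \<le> grid n i"
      using calculation by (simp_all add: grid_le_iff)
    ultimately show "vabs (e j - e i) \<le> 2 * real CARD('h) * nf * C * (grid n j - grid n i) powr \<alpha>"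
      using b assms by (intro euler_local_hoelder_grid) auto
  qed
  also have "\<dots> \<le> 2 * \<kappa> * (K - 1) * (v - grid n k) powr \<alpha>
      * (real CARD('h) * nf * C * (v - grid n k) powr \<alpha>)"
    using zeta_sum_le[of "b - k"] kappa_nonneg nf_nonneg C_pos
    by (intro mult_right_mono mult_left_mono) auto
  finally show ?thesis .
qed

text \<open>Split off the first, incomplete cell \<open>[u, t1]\<close>: from \<open>t1\<close> on the remainder estimate
  applies, and the jump of \<open>f (e k)\<close> at \<open>t1\<close> only contributes a second-order term because
  \<open>v - u\<close> exceeds the mesh.\<close>
lemma euler_interp_local_hoelder_beyond_mesh:
  assumes "0 \<le> u" "v \<le> 1" "1 / 2 ^ n < v - u" "v - u \<le> 1 / real N"
  shows "vabs (z v - z u) \<le> 2 * real CARD('h) * nf * C * (v - u) powr \<alpha>"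
proof -
  define r where "r = v - u"
  define Q where "Q = real CARD('h) * nf * C * r powr \<alpha>"
  define a where "a = cell n u"
  define t1 where "t1 = grid n (Suc a)"
  have Q: "0 \<le> Q" using nf_nonneg C_pos by (simp add: Q_def)
  have a: "grid n a \<le> u" "u < t1" using cell_bounds[OF assms(1)] by (auto simp: a_def t1_def)
  have mesh_pos: "(0::real) < 1 / 2 ^ n" by simp
  then have "u < 1" using assms(2,3) by linarith
  then have "a < 2 ^ n" using cell_less[OF assms(1)] by (simp add: a_def)
  have "t1 < v" using a assms(3) by (simp add: t1_def grid_Suc)
  have "vabs ((z v - e (Suc a)) - f (e (Suc a)) *v (X v - X t1))
      \<le> 2 * \<kappa> * (K - 1) * (v - t1) powr \<alpha> * (real CARD('h) * nf * C * (v - t1) powr \<alpha>)"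
    unfolding t1_def using \<open>t1 < v\<close> a assms by (intro euler_interp_remainder_local_le) (auto simp: t1_def)
  also have "\<dots> \<le> 2 * \<kappa> * (K - 1) * r powr \<alpha> * Q"
    unfolding Q_def using a alpha K_ge_one kappa_nonneg nf_nonneg C_pos \<open>t1 < v\<close>
    by (intro mult_mono mult_left_mono powr_mono2 mult_nonneg_nonneg) (auto simp: r_def)
  finally have remainder: "vabs ((z v - e (Suc a)) - f (e (Suc a)) *v (X v - X t1))
      \<le> 2 * \<kappa> * (K - 1) * r powr \<alpha> * Q" .
  have "vabs (f (e (Suc a)) *v (X v - X u)) \<le> real CARD('h) * nf * vabs (X v - X u)"
    by (rule vabs_f_mult_le)
  also have "\<dots> \<le> real CARD('h) * nf * (C * (v - u) powr \<alpha>)"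
    using X_hoelder[of u v] assms mesh_pos nf_nonneg by (intro mult_left_mono) auto
  finally have first_order: "vabs (f (e (Suc a)) *v (X v - X u)) \<le> Q" by (simp add: Q_def r_def)
  have correction: "vabs ((f (e a) - f (e (Suc a))) *v (X t1 - X u)) \<le> \<kappa> * r powr \<alpha> * Q"
    unfolding Q_def t1_def
    using a \<open>a < 2 ^ n\<close> assms(3) \<open>t1 < v\<close> by (intro euler_cell_correction_le) (auto simp: r_def t1_def)
  have "z t1 - z u = f (e a) *v (X t1 - X u)"
    using z_diff_cell[of a u t1] a by (simp add: t1_def)
  then have "z v - z u = ((z v - e (Suc a)) - f (e (Suc a)) *v (X v - X t1))
      + f (e (Suc a)) *v (X v - X u) + (f (e a) - f (e (Suc a))) *v (X t1 - X u)"
    by (simp add: t1_def z_grid algebra_simps matrix_vector_mult_diff_distrib matrix_vector_mult_diff_rdistrib)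
  then have "vabs (z v - z u) \<le> 2 * \<kappa> * (K - 1) * r powr \<alpha> * Q + Q + \<kappa> * r powr \<alpha> * Q"
    using remainder first_order correction vabs_triangle3 by (smt (verit))
  also have "\<dots> = Q + (2 * \<kappa> * K * r powr \<alpha>) * Q - \<kappa> * r powr \<alpha> * Q"
    by (simp add: algebra_simps)
  also have "\<dots> \<le> Q + (2 * \<kappa> * K * r powr \<alpha>) * Q"
    using Q kappa_nonneg by (simp add: mult_nonneg_nonneg)
  also have "\<dots> \<le> Q + 1 * Q"
    using small_scale[of r] assms mesh_pos Q by (intro add_left_mono mult_right_mono) (auto simp: r_def)
  finally show ?thesis by (simp add: Q_def r_def mult_ac)
qed

lemma euler_interp_local_hoelder:
  assumes "0 \<le> u" "u \<le> v" "v \<le> 1" "v - u \<le> 1 / real N"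
  shows "vabs (z v - z u) \<le> 2 * real CARD('h) * nf * C * (v - u) powr \<alpha>"
proof (cases "v - u \<le> 1 / 2 ^ n")
  case True
  have "0 \<le> real CARD('h) * nf * C * (v - u) powr \<alpha>" using nf_nonneg C_pos by simp
  then show ?thesis using euler_interp_hoelder_within_mesh[OF assms(1-3) True] by simp
next
  case False
  then show ?thesis using euler_interp_local_hoelder_beyond_mesh assms by simp
qed

text \<open>Cover \<open>[t_i, t_j]\<close> by \<open>q = \<lceil>r N\<rceil> \<le> N\<close> equal pieces of length at most \<open>1 / N\<close>; the
  local bounds add up to \<open>q powr (1 - \<alpha>) * r powr \<alpha>\<close>.\<close>
lemma euler_hoelder:
  assumes "i < j" "j \<le> 2 ^ n"
  shows "vabs (e j - e i) \<le> 2 * real CARD('h) * real N powr (1 - \<alpha>) * nf * C * (grid n j - grid n i) powr \<alpha>"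
proof -
  define r where "r = grid n j - grid n i"
  define A where "A = 2 * real CARD('h) * nf * C"
  define q where "q = nat \<lceil>r * real N\<rceil>"
  define t where "t l = grid n i + real l * (r / real q)" for l
  have r: "0 < r" "r \<le> 1"
    using assms grid_less_iff[of n i j] grid_le_one[of j n] grid_nonneg[of n i] by (auto simp: r_def)
  have q: "r * real N \<le> real q" "0 < real q" "q \<le> N"
    using r N_pos mult_right_mono[of r 1 "real N"] by (auto simp: q_def)
  have A: "0 \<le> A" using nf_nonneg C_pos by (simp add: A_def)
  have t_range: "0 \<le> t l \<and> t l \<le> 1" if "l \<le> q" for l
  proof -
    have "real l * (r / real q) \<le> r"
      using that r q mult_right_mono[of "real l" "real q" "r / real q"] by simp
    then show ?thesis using r grid_nonneg[of n i] grid_le_one[OF assms(2)] by (simp add: t_def r_def)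
  qed
  have "e j - e i = (\<Sum>l<q. z (t (Suc l)) - z (t l))"
    using sum_lessThan_telescope[of "\<lambda>l. z (t l)" q] q(2) by (simp add: t_def r_def z_grid)
  then have "vabs (e j - e i) \<le> (\<Sum>l<q. vabs (z (t (Suc l)) - z (t l)))"
    by (simp add: vabs_sum_le)
  also have "\<dots> \<le> (\<Sum>l<q. A * (r / real q) powr \<alpha>)"
  proof (intro sum_mono)
    fix l assume "l \<in> {..<q}"
    then have "0 \<le> t l \<and> t l \<le> 1" "0 \<le> t (Suc l) \<and> t (Suc l) \<le> 1"
      using t_range by auto
    moreover have step: "t (Suc l) - t l = r / real q"
      by (simp add: t_def algebra_simps add_divide_distrib)
    moreover have "0 < r / real q" "r / real q \<le> 1 / real N"
      using r q N_pos by (simp_all add: field_simps)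
    ultimately show "vabs (z (t (Suc l)) - z (t l)) \<le> A * (r / real q) powr \<alpha>"
      using euler_interp_local_hoelder[of "t l" "t (Suc l)"] by (simp add: A_def)
  qed
  also have "\<dots> = A * (real q powr (1 - \<alpha>) * r powr \<alpha>)"
    using q r by (simp add: powr_divide powr_diff)
  also have "\<dots> \<le> A * (real N powr (1 - \<alpha>) * r powr \<alpha>)"
    using q alpha A by (intro mult_left_mono mult_right_mono powr_mono2) auto
  finally show ?thesis by (simp add: A_def r_def mult_ac)
qed

end

lemma euler_hoelder_bound:
  fixes x :: "real \<Rightarrow> real^'h::finite" and f :: "real^'d::finite \<Rightarrow> real^'h^'d"
  assumes alpha: "1/2 < \<alpha>" "\<alpha> \<le> 1" and C_pos: "0 < C"
    and x_hoelder: "\<And>s t. s \<in> {0..1} \<Longrightarrow> t \<in> {0..1} \<Longrightarrow> vabs (x t - x s) \<le> C * \<bar>t - s\<bar> powr \<alpha>"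
    and f_bound: "\<And>w. mabs (f w) \<le> nf"
    and f_lipschitz: "\<And>a b. mabs (f a - f b) \<le> real CARD('d) * ndf * vabs (a - b)"
    and ndf_pos: "0 < ndf" and "i < j" "j \<le> 2 ^ n"
  defines "K \<equiv> 1 + (\<Sum>m. 1 / real (Suc m) powr (2 * \<alpha>))"
  shows "vabs (euler f x y0 n j - euler f x y0 n i)
    \<le> 2 * real CARD('h) * (of_int \<lceil>(2 * real CARD('d) * real CARD('h) * C * K * ndf) powr (1 / \<alpha>)\<rceil>) powr (1 - \<alpha>)
      * nf * C * (grid n j - grid n i) powr \<alpha>"
proof -
  define Y where "Y = 2 * real CARD('d) * real CARD('h) * C * K * ndf"
  define N where "N = nat \<lceil>Y powr (1 / \<alpha>)\<rceil>"
  have zeta_K: "1 + zeta_sum (2 * \<alpha>) m \<le> K" for m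
    using zeta_sum_le_suminf[of "2 * \<alpha>" m] alpha by (simp add: K_def)
  then have "1 \<le> K" using zeta_sum_nonneg[of "2 * \<alpha>" 0] by (smt (verit))
  then have "0 < Y" using ndf_pos C_pos by (simp add: Y_def)
  then have N: "Y powr (1 / \<alpha>) \<le> real N" "0 < N" "real N = of_int \<lceil>Y powr (1 / \<alpha>)\<rceil>"
    by (auto simp: N_def)
  have "Y = (Y powr (1 / \<alpha>)) powr \<alpha>" using \<open>0 < Y\<close> alpha by (simp add: powr_powr)
  also have "\<dots> \<le> real N powr \<alpha>" using N alpha by (intro powr_mono2) auto
  finally have "Y \<le> real N powr \<alpha>" .
  then interpret euler_scheme x f y0 n \<alpha> C nf ndf "real CARD('h) * real CARD('d) * ndf * C" K N
    using alpha C_pos x_hoelder f_bound f_lipschitz ndf_pos zeta_K N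
    by unfold_locales (auto simp: Y_def algebra_simps)
  show ?thesis
    using euler_hoelder[OF assms(8,9)] N(3) by (simp add: Y_def)
qed

section \<open>Hoelder seminorms on the grid\<close>

lemma Hgrid_finite: "finite {nm (u i - u j) / \<bar>grid n i - grid n j\<bar> powr \<alpha> | i j. i < j \<and> j \<le> 2 ^ n}"
proof -
  have "{nm (u i - u j) / \<bar>grid n i - grid n j\<bar> powr \<alpha> | i j. i < j \<and> j \<le> 2 ^ n}
      \<subseteq> (\<lambda>(i, j). nm (u i - u j) / \<bar>grid n i - grid n j\<bar> powr \<alpha>) ` ({..2 ^ n} \<times> {..2 ^ n})"
    by force
  then show ?thesis by (rule finite_subset) simp
qed

lemma Hgrid_diff_le:
  assumes "i < j" "j \<le> 2 ^ n"
  shows "nm (u i - u j) \<le> Hgrid nm n \<alpha> u * (grid n j - grid n i) powr \<alpha>"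
proof -
  have "nm (u i - u j) / \<bar>grid n i - grid n j\<bar> powr \<alpha> \<le> Hgrid nm n \<alpha> u"
    unfolding Hgrid_def using assms by (intro Max_ge[OF Hgrid_finite]) blast
  moreover have "\<bar>grid n i - grid n j\<bar> = grid n j - grid n i" "0 < grid n j - grid n i"
    using assms grid_less_iff[of n i j] by auto
  ultimately show ?thesis by (simp add: divide_le_eq)
qed

lemma Hgrid_leI:
  assumes "\<And>i j. i < j \<Longrightarrow> j \<le> 2 ^ n \<Longrightarrow> nm (u i - u j) \<le> c * (grid n j - grid n i) powr \<alpha>"
  shows "Hgrid nm n \<alpha> u \<le> c"
  unfolding Hgrid_def
proof (subst Max_le_iff[OF Hgrid_finite])
  show "{nm (u i - u j) / \<bar>grid n i - grid n j\<bar> powr \<alpha> | i j. i < j \<and> j \<le> 2 ^ n} \<noteq> {}"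
  proof -
    have "(0::nat) < 1 \<and> (1::nat) \<le> 2 ^ n" by simp
    then show ?thesis by blast
  qed
  show "\<forall>a\<in>{nm (u i - u j) / \<bar>grid n i - grid n j\<bar> powr \<alpha> | i j. i < j \<and> j \<le> 2 ^ n}. a \<le> c"
  proof clarify
    fix i j :: nat assume "i < j" "j \<le> 2 ^ n"
    moreover have "\<bar>grid n i - grid n j\<bar> = grid n j - grid n i" "0 < grid n j - grid n i"
      using calculation grid_less_iff[of n i j] by auto
    ultimately show "nm (u i - u j) / \<bar>grid n i - grid n j\<bar> powr \<alpha> \<le> c"
      using assms by (simp add: divide_le_eq)
  qed
qed

lemma Hgrid_nonneg:
  assumes "\<And>w. 0 \<le> nm w"
  shows "0 \<le> Hgrid nm n \<alpha> u"
proof -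
  have "nm (u 0 - u 1) / \<bar>grid n 0 - grid n 1\<bar> powr \<alpha> \<le> Hgrid nm n \<alpha> u"
    unfolding Hgrid_def by (intro Max_ge[OF Hgrid_finite]) force
  then show ?thesis using assms[of "u 0 - u 1"] by (smt (verit) divide_nonneg_nonneg powr_ge_zero)
qed

lemma vabs_le_Hgrid:
  assumes "k \<le> 2 ^ n" "0 \<le> \<alpha>"
  shows "vabs (u k) \<le> vabs (u 0) + Hgrid vabs n \<alpha> u"
proof (cases "k = 0")
  case False
  have "grid n k powr \<alpha> \<le> 1"
    using assms grid_nonneg[of n k] grid_le_one[of k n] powr_mono2[of \<alpha> "grid n k" 1] by simp
  have "vabs (u 0 - u k) \<le> Hgrid vabs n \<alpha> u * grid n k powr \<alpha>"
    using Hgrid_diff_le[of 0 k n vabs u \<alpha>] assms False by simp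
  also have "\<dots> \<le> Hgrid vabs n \<alpha> u * 1"
    using \<open>grid n k powr \<alpha> \<le> 1\<close> by (intro mult_left_mono Hgrid_nonneg vabs_nonneg)
  finally show ?thesis
    using vabs_triangle[of "u 0" "u k - u 0"] vabs_minus_commute[of "u k" "u 0"] by simp
qed (simp add: Hgrid_nonneg vabs_nonneg)

text \<open>Apply \<open>second_difference_le\<close> with \<open>M = vabs (u 0 - v 0) + Hgrid vabs n \<alpha> (u - v)\<close>, which
  bounds \<open>u - v\<close> on the whole grid.\<close>
lemma Hgrid_comp_diff_le:
  fixes F :: "real^'d::finite \<Rightarrow> real^'h::finite^'d" and u v :: "nat \<Rightarrow> real^'d"
  assumes DF: "\<And>i j z. ((\<lambda>w. F w $ i $ j) has_derivative (\<lambda>v. DF i j z \<bullet> v)) (at z)"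
    and D2F: "\<And>i j z. (DF i j has_derivative (\<lambda>v. D2F i j z *v v)) (at z)"
    and DF_bound: "\<And>i j z k. \<bar>DF i j z $ k\<bar> \<le> B1"
    and D2F_bound: "\<And>i j z k l. \<bar>D2F i j z $ k $ l\<bar> \<le> B2"
    and v_hoelder: "\<And>i j. i < j \<Longrightarrow> j \<le> 2 ^ n \<Longrightarrow> vabs (v j - v i) \<le> G * (grid n j - grid n i) powr \<alpha>"
    and "0 \<le> \<alpha>"
  shows "Hgrid mabs n \<alpha> (\<lambda>k. F (u k) - F (v k))
    \<le> (real CARD('d) * B1 + (real CARD('d))\<^sup>2 * B2 * G) * Hgrid vabs n \<alpha> (\<lambda>k. u k - v k)
      + (real CARD('d))\<^sup>2 * B2 * G * vabs (u 0 - v 0)"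
proof (rule Hgrid_leI)
  fix i j :: nat assume ij: "i < j" "j \<le> 2 ^ n"
  define d where "d = real CARD('d)"
  define H where "H = Hgrid vabs n \<alpha> (\<lambda>k. u k - v k)"
  define M where "M = vabs (u 0 - v 0) + H"
  define \<Delta> where "\<Delta> = (grid n j - grid n i) powr \<alpha>"
  have B2: "0 \<le> B2" using D2F_bound[of undefined undefined undefined undefined undefined] by linarith
  have M: "vabs (u k - v k) \<le> M" if "k \<le> 2 ^ n" for k
    using vabs_le_Hgrid[OF that \<open>0 \<le> \<alpha>\<close>, of "\<lambda>k. u k - v k"] by (simp add: M_def H_def)
  have "mabs ((F (u i) - F (v i)) - (F (u j) - F (v j))) = mabs ((F (u j) - F (v j)) - (F (u i) - F (v i)))"
    unfolding mabs_def by (simp add: abs_minus_commute)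
  also have "\<dots> \<le> d * B1 * vabs ((u j - u i) - (v j - v i)) + d * (d * B2 * M) * vabs (v j - v i)"
    unfolding d_def using M ij by (intro mabs_second_difference_le[OF DF D2F DF_bound D2F_bound]) auto
  also have "\<dots> \<le> d * B1 * (H * \<Delta>) + d * (d * B2 * M) * (G * \<Delta>)"
  proof (intro add_mono mult_left_mono)
    have "(u j - u i) - (v j - v i) = (u j - v j) - (u i - v i)"
      by (simp add: algebra_simps)
    then have "vabs ((u j - u i) - (v j - v i)) = vabs ((u i - v i) - (u j - v j))"
      using vabs_minus_commute by metis
    then show "vabs ((u j - u i) - (v j - v i)) \<le> H * \<Delta>"
      using Hgrid_diff_le[OF ij, of vabs "\<lambda>k. u k - v k"] by (simp add: H_def \<Delta>_def)
    show "vabs (v j - v i) \<le> G * \<Delta>" using v_hoelder[OF ij] by (simp add: \<Delta>_def)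
    show "0 \<le> d * B1" "0 \<le> d * (d * B2 * M)"
      using DF_bound[of undefined undefined undefined undefined] B2 M[of 0]
        vabs_nonneg[of "u 0 - v 0"] by (auto simp: d_def)
  qed
  also have "\<dots> = ((d * B1 + d\<^sup>2 * B2 * G) * H + d\<^sup>2 * B2 * G * vabs (u 0 - v 0)) * \<Delta>"
    by (simp add: M_def power2_eq_square algebra_simps)
  finally show "mabs ((F (u i) - F (v i)) - (F (u j) - F (v j)))
      \<le> ((real CARD('d) * B1 + (real CARD('d))\<^sup>2 * B2 * G) * Hgrid vabs n \<alpha> (\<lambda>k. u k - v k)
        + (real CARD('d))\<^sup>2 * B2 * G * vabs (u 0 - v 0)) * (grid n j - grid n i) powr \<alpha>"
    by (simp add: d_def H_def \<Delta>_def)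
qed

lemma supF_upper: "bdd_above {\<bar>f z $ i $ j\<bar> | z i j. True} \<Longrightarrow> \<bar>f z $ i $ j\<bar> \<le> supF f"
  unfolding supF_def by (rule cSup_upper) blast+

lemma supDF_upper: "bdd_above {\<bar>Df i j z $ k\<bar> | i j z k. True} \<Longrightarrow> \<bar>Df i j z $ k\<bar> \<le> supDF Df"
  unfolding supDF_def by (rule cSup_upper) blast+

lemma supD2F_upper:
  "bdd_above {\<bar>D2f i j z $ k $ l\<bar> | i j z k l. True} \<Longrightarrow> \<bar>D2f i j z $ k $ l\<bar> \<le> supD2F D2f"
  unfolding supD2F_def by (rule cSup_upper) blast+

lemma Hgrid_comp_euler_le:
  fixes x :: "real \<Rightarrow> real^'h::finite" and f :: "real^'d::finite \<Rightarrow> real^'h^'d"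
    and u :: "nat \<Rightarrow> real^'d"
  assumes alpha: "1/2 < \<alpha>" "\<alpha> \<le> 1" and C_pos: "0 < C"
    and x_hoelder: "\<And>s t. s \<in> {0..1} \<Longrightarrow> t \<in> {0..1} \<Longrightarrow> vabs (x t - x s) \<le> C * \<bar>t - s\<bar> powr \<alpha>"
    and Df: "\<And>i j z. ((\<lambda>w. f w $ i $ j) has_derivative (\<lambda>v. Df i j z \<bullet> v)) (at z)"
    and D2f: "\<And>i j z. (Df i j has_derivative (\<lambda>v. D2f i j z *v v)) (at z)"
    and f_bound: "\<And>w. mabs (f w) \<le> nf"
    and Df_bound: "\<And>i j z k. \<bar>Df i j z $ k\<bar> \<le> ndf"
    and D2f_bound: "\<And>i j z k l. \<bar>D2f i j z $ k $ l\<bar> \<le> nd2f"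
  defines "d \<equiv> real CARD('d)" and "h \<equiv> real CARD('h)"
  defines "K \<equiv> 1 + (\<Sum>m. 1 / real (Suc m) powr (2 * \<alpha>))"
  defines "G \<equiv> 2 * h * (of_int \<lceil>(2 * d * h * C * K * ndf) powr (1 / \<alpha>)\<rceil>) powr (1 - \<alpha>) * nf * C"
  shows "Hgrid mabs n \<alpha> (\<lambda>k. f (u k) - f (euler f x y0 n k))
    \<le> (d * ndf + d\<^sup>2 * nd2f * G) * Hgrid vabs n \<alpha> (\<lambda>k. u k - euler f x y0 n k) + d\<^sup>2 * nd2f * G * vabs (u 0 - y0)"
proof (cases "ndf = 0")
  case True
  have const: "f a - f b = 0" for a b
    using mabs_lipschitz_of_gradient_bound[OF Df Df_bound, of a b] mabs_nonneg[of "f a - f b"] True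
    by (simp add: mabs_eq_0_iff)
  have "Hgrid mabs n \<alpha> (\<lambda>k. f (u k) - f (euler f x y0 n k)) \<le> 0"
    by (intro Hgrid_leI) (simp add: const mabs_def)
  also have "0 \<le> (d * ndf + d\<^sup>2 * nd2f * G) * Hgrid vabs n \<alpha> (\<lambda>k. u k - euler f x y0 n k)
      + d\<^sup>2 * nd2f * G * vabs (u 0 - y0)"
    using D2f_bound[of _ _ 0] f_bound[of 0] mabs_nonneg[of "f 0"] C_pos True
    by (auto simp: G_def h_def intro!: add_nonneg_nonneg mult_nonneg_nonneg Hgrid_nonneg vabs_nonneg
        intro: order_trans[OF abs_ge_zero])
  finally show ?thesis .
next
  case False
  then have "0 < ndf" using Df_bound[of _ _ 0] abs_ge_zero order_trans by (metis order.not_eq_order_implies_strict)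
  have "vabs (euler f x y0 n j - euler f x y0 n i) \<le> G * (grid n j - grid n i) powr \<alpha>"
    if "i < j" "j \<le> 2 ^ n" for i j
    using euler_hoelder_bound[OF alpha C_pos x_hoelder f_bound mabs_lipschitz_of_gradient_bound[OF Df Df_bound]
        \<open>0 < ndf\<close> that]
    by (simp add: G_def K_def d_def h_def)
  from Hgrid_comp_diff_le[OF Df D2f Df_bound D2f_bound this] alpha
  show ?thesis by (simp add: d_def)
qed

theorem lemma11:
  fixes x :: "real \<Rightarrow> real^'h::finite"
    and f :: "real^'d::finite \<Rightarrow> real^'h^'d"
    and Df :: "'d \<Rightarrow> 'h \<Rightarrow> real^'d \<Rightarrow> real^'d"
    and D2f :: "'d \<Rightarrow> 'h \<Rightarrow> real^'d \<Rightarrow> real^'d^'d"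
    and y :: "real \<Rightarrow> real^'d"
    and y0 :: "real^'d"
    and \<alpha> C :: real and n :: nat
  assumes alpha: "1/2 < \<alpha>" "\<alpha> \<le> 1"
    and C_pos: "0 < C"
    and x_hoelder: "\<And>s t. s \<in> {0..1} \<Longrightarrow> t \<in> {0..1} \<Longrightarrow> vabs (x t - x s) \<le> C * \<bar>t - s\<bar> powr \<alpha>"
    and Df: "\<And>i j z. ((\<lambda>w. f w $ i $ j) has_derivative (\<lambda>v. Df i j z \<bullet> v)) (at z)"
    and D2f: "\<And>i j z. (Df i j has_derivative (\<lambda>v. D2f i j z *v v)) (at z)"
    and D2f_cont: "\<And>i j. continuous_on UNIV (D2f i j)"
    and f_bdd: "bdd_above {\<bar>f z $ i $ j\<bar> | z i j. True}"
    and Df_bdd: "bdd_above {\<bar>Df i j z $ k\<bar> | i j z k. True}"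
    and D2f_bdd: "bdd_above {\<bar>D2f i j z $ k $ l\<bar> | i j z k l. True}"
    and y_sol: "\<And>t. t \<in> {0..1} \<Longrightarrow> young_has_integral (\<lambda>s. f (y s)) x 0 t (y t - y0)"
  defines "d \<equiv> real CARD('d)" and "h \<equiv> real CARD('h)"
    and "nf \<equiv> supF f" and "ndf \<equiv> supDF Df" and "nd2f \<equiv> supD2F D2f"
  defines "K \<equiv> 1 + (\<Sum>m. 1 / real (Suc m) powr (2 * \<alpha>))"
  defines "G1s \<equiv> 2 * h * (of_int \<lceil>(2 * d * h * C * K * ndf) powr (1 / \<alpha>)\<rceil>) powr (1 - \<alpha>) * nf * C"
  defines "L \<equiv> 4 / (1 - 2 powr (1 - 2 * \<alpha>)) * (h * C)\<^sup>2 * ndf * nf"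
  defines "\<omega> \<equiv> (h * nf * C / L) powr (1 / \<alpha>)"
  defines "G1 \<equiv> (L + h * nf * C) * (1 + 1 / \<omega>)"
  shows "Hgrid mabs n \<alpha> (\<lambda>k. f (y (grid n k)) - f (euler f x y0 n k))
     \<le> (d * ndf + d\<^sup>2 * nd2f * (G1s + G1)) * Hgrid vabs n \<alpha> (\<lambda>k. y (grid n k) - euler f x y0 n k)
       + d\<^sup>2 * nd2f * (G1s + G1) * vabs (y 0 - euler f x y0 n 0)"
proof -
  have nf: "mabs (f w) \<le> nf" for w
    unfolding nf_def by (rule mabs_leI) (rule supF_upper[OF f_bdd])
  have ndf: "\<bar>Df i j z $ k\<bar> \<le> ndf" for i j z k
    unfolding ndf_def by (rule supDF_upper[OF Df_bdd])
  have nd2f: "\<bar>D2f i j z $ k $ l\<bar> \<le> nd2f" for i j z k l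
    unfolding nd2f_def by (rule supD2F_upper[OF D2f_bdd])
  have "0 \<le> nf" "0 \<le> ndf" "0 \<le> nd2f"
    using nf[of 0] ndf[of _ _ 0] nd2f[of _ _ 0] mabs_nonneg abs_ge_zero order_trans by blast+
  moreover have "2 powr (1 - 2 * \<alpha>) < 1" using alpha by (intro powr_less_one) auto
  ultimately have "0 \<le> G1" using C_pos by (simp add: G1_def L_def \<omega>_def h_def)
  let ?H = "Hgrid vabs n \<alpha> (\<lambda>k. y (grid n k) - euler f x y0 n k)"
  have "Hgrid mabs n \<alpha> (\<lambda>k. f (y (grid n k)) - f (euler f x y0 n k))
      \<le> (d * ndf + d\<^sup>2 * nd2f * G1s) * ?H + d\<^sup>2 * nd2f * G1s * vabs (y 0 - euler f x y0 n 0)"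
    using Hgrid_comp_euler_le[OF alpha C_pos x_hoelder Df D2f nf ndf nd2f, of n "\<lambda>k. y (grid n k)" y0]
    by (simp add: G1s_def K_def d_def h_def)
  also have "\<dots> \<le> (d * ndf + d\<^sup>2 * nd2f * (G1s + G1)) * ?H + d\<^sup>2 * nd2f * (G1s + G1) * vabs (y 0 - euler f x y0 n 0)"
    using \<open>0 \<le> G1\<close> \<open>0 \<le> nd2f\<close> \<open>0 \<le> ndf\<close>
    by (intro add_mono mult_right_mono add_left_mono mult_left_mono Hgrid_nonneg vabs_nonneg) auto
  finally show ?thesis .
qed

end
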